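(* Let $G=(V,E)$ be an oriented graph, $\omega=e^{2\pi i/5}$, and $V'\subseteq V$. Let $E'_1,E'_2,\dots$ be the edge sets $E'\subseteq E$ with $|E'|=|V'|$ such that $(V',E'_j)$ is all-regular, and for each $j$ let $n_\alpha^{(j)},n_\beta^{(j)},n_0^{(j)}$ be the numbers of alpha, beta and vanishing unicyclic components of $(V',E'_j)$ respectively. Then, with $\phi=(1+\sqrt5)/2$, $$\det L_\omega[V']=\sum_j \delta_0\big(n_0^{(j)}\big)\,(\sqrt5)^{\,n_\alpha^{(j)}+n_\beta^{(j)}}\,\phi^{\,n_\alpha^{(j)}-n_\beta^{(j)}},$$ where $\delta_0(x)=1$ if $x=0$ and $0$ otherwise.
   Context: An oriented graph is a finite directed graph with no loops, no multiple arcs, and no pair of opposite arcs. $L_\omega(G)$ is the $V\times V$ matrix with diagonal entry at $u$ the number of arcs incident with $u$ and $(u,v)$ entry ($u\ne v$) $-\omega$ if $u\to v$, $-\overline\omega$ if $v\to u$, $0$ otherwise; $L_\omega[V']$ is its principal submatrix on $V'$. A substructure is $(V',E')$ with $V'\subseteq V$, $E'\subseteq E$ (arcs may leave $V'$). Its connected components are the classes $V'_i$ of vertices of $V'$ joined by paths (ignoring directions) with vertices in $V'$ and arcs in $E'$, together with the sets $E'_i$ of arcs of $E'$ having an endpoint in $V'_i$; it is all-regular if $|V'_i|=|E'_i|$ for all $i$. A unicyclic component is a component whose arcs all have both ends in $V'_i$ and whose underlying graph is connected with exactly one cycle. For a cycle of length $k$, traverse it in the direction for which the number $g$ of arcs against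 the traversal satisfies $0\le g\le\lfloor k/2\rfloor$ ($g$ = number of negative arcs). A unicyclic component whose cycle has length $k$ and $g$ negative arcs is called alpha if $k-2g\equiv 2,3\pmod 5$, beta if $k-2g\equiv1,4\pmod5$, and vanishing if $k-2g\equiv0\pmod5$. *)

theory Defs
  imports Complex_Main "HOL-Combinatorics.Permutations"
begin

definition oriented_graph :: "'a set \<Rightarrow> ('a \<times> 'a) set \<Rightarrow> bool" where
  "oriented_graph V E \<longleftrightarrow> finite V \<and> E \<subseteq> V \<times> V
     \<and> (\<forall>u. (u, u) \<notin> E) \<and> (\<forall>u v. (u, v) \<in> E \<longrightarrow> (v, u) \<notin> E)"

definition omega5 :: complex where
  "omega5 = exp (2 * pi * \<i> / 5)"

definition Lmat :: "complex \<Rightarrow> ('a \<times> 'a) set \<Rightarrow> 'a \<Rightarrow> 'a \<Rightarrow> complex" where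
  "Lmat w E u v =
     (if u = v then of_nat (card {e \<in> E. fst e = u \<or> snd e = u})
      else if (u, v) \<in> E then - w
      else if (v, u) \<in> E then - cnj w
      else 0)"

text \<open>Determinant of the principal submatrix on a finite index set (Leibniz formula,
  exactly as the library's det is defined).\<close>
definition det_on :: "'a set \<Rightarrow> ('a \<Rightarrow> 'a \<Rightarrow> complex) \<Rightarrow> complex" where
  "det_on S M = (\<Sum>p\<in>{p. p permutes S}. of_int (sign p) * (\<Prod>i\<in>S. M i (p i)))"

definition sub_adj :: "'a set \<Rightarrow> ('a \<times> 'a) set \<Rightarrow> ('a \<times> 'a) set" where
  "sub_adj V' E' = {(u, v). u \<in> V' \<and> v \<in> V' \<and> ((u, v) \<in> E' \<or> (v, u) \<in> E')}"

definition sub_conn :: "'a set \<Rightarrow> ('a \<times> 'a) set \<Rightarrow> ('a \<times> 'a) set" where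
  "sub_conn V' E' = {(u, v). u \<in> V' \<and> v \<in> V' \<and> (u, v) \<in> (sub_adj V' E')\<^sup>*}"

definition components :: "'a set \<Rightarrow> ('a \<times> 'a) set \<Rightarrow> 'a set set" where
  "components V' E' = V' // sub_conn V' E'"

definition comp_arcs :: "('a \<times> 'a) set \<Rightarrow> 'a set \<Rightarrow> ('a \<times> 'a) set" where
  "comp_arcs E' C = {e \<in> E'. fst e \<in> C \<or> snd e \<in> C}"

definition all_regular :: "'a set \<Rightarrow> ('a \<times> 'a) set \<Rightarrow> bool" where
  "all_regular V' E' \<longleftrightarrow> (\<forall>C \<in> components V' E'. card C = card (comp_arcs E' C))"

definition joined :: "('a \<times> 'a) set \<Rightarrow> 'a \<Rightarrow> 'a \<Rightarrow> bool" where
  "joined A u v \<longleftrightarrow> (u, v) \<in> A \<or> (v, u) \<in> A"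

definition cycle_list :: "('a \<times> 'a) set \<Rightarrow> 'a list \<Rightarrow> bool" where
  "cycle_list A vs \<longleftrightarrow> distinct vs \<and> length vs \<ge> 3 \<and>
     (\<forall>j < length vs. joined A (vs ! j) (vs ! ((j + 1) mod length vs)))"

definition cycle_arcs :: "('a \<times> 'a) set \<Rightarrow> 'a list \<Rightarrow> ('a \<times> 'a) set" where
  "cycle_arcs A vs = {e \<in> A. \<exists>j < length vs.
       e = (vs ! j, vs ! ((j + 1) mod length vs)) \<or> e = (vs ! ((j + 1) mod length vs), vs ! j)}"

text \<open>A cycle (as a subgraph, i.e. its arc set).\<close>
definition is_cycle :: "('a \<times> 'a) set \<Rightarrow> ('a \<times> 'a) set \<Rightarrow> bool" where
  "is_cycle A Z \<longleftrightarrow> (\<exists>vs. cycle_list A vs \<and> Z = cycle_arcs A vs)"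

definition unicyclic :: "'a set \<Rightarrow> ('a \<times> 'a) set \<Rightarrow> bool" where
  "unicyclic C A \<longleftrightarrow> (\<forall>e \<in> A. fst e \<in> C \<and> snd e \<in> C)
     \<and> (\<forall>u \<in> C. \<forall>v \<in> C. (u, v) \<in> (sub_adj C A)\<^sup>*)
     \<and> (\<exists>!Z. is_cycle A Z)"

definition fwd_count :: "('a \<times> 'a) set \<Rightarrow> 'a list \<Rightarrow> nat" where
  "fwd_count A vs = card {j. j < length vs \<and> (vs ! j, vs ! ((j + 1) mod length vs)) \<in> A}"

text \<open>k - 2g where k is the cycle length and g the number of negative arcs in the traversal
  direction with g \<le> floor(k/2), i.e. g = min(forward, backward).\<close>
definition cyc_val :: "('a \<times> 'a) set \<Rightarrow> 'a list \<Rightarrow> nat" where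
  "cyc_val A vs = (let k = length vs; f = fwd_count A vs; g = min (k - f) f in k - 2 * g)"

definition alpha_comp :: "'a set \<Rightarrow> ('a \<times> 'a) set \<Rightarrow> bool" where
  "alpha_comp C A \<longleftrightarrow> unicyclic C A \<and>
     (\<exists>vs. cycle_list A vs \<and> cyc_val A vs mod 5 \<in> {2, 3})"

definition beta_comp :: "'a set \<Rightarrow> ('a \<times> 'a) set \<Rightarrow> bool" where
  "beta_comp C A \<longleftrightarrow> unicyclic C A \<and>
     (\<exists>vs. cycle_list A vs \<and> cyc_val A vs mod 5 \<in> {1, 4})"

definition vanishing_comp :: "'a set \<Rightarrow> ('a \<times> 'a) set \<Rightarrow> bool" where
  "vanishing_comp C A \<longleftrightarrow> unicyclic C A \<and>
     (\<exists>vs. cycle_list A vs \<and> cyc_val A vs mod 5 = 0)"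

definition n_alpha :: "'a set \<Rightarrow> ('a \<times> 'a) set \<Rightarrow> nat" where
  "n_alpha V' E' = card {C \<in> components V' E'. alpha_comp C (comp_arcs E' C)}"

definition n_beta :: "'a set \<Rightarrow> ('a \<times> 'a) set \<Rightarrow> nat" where
  "n_beta V' E' = card {C \<in> components V' E'. beta_comp C (comp_arcs E' C)}"

definition n_van :: "'a set \<Rightarrow> ('a \<times> 'a) set \<Rightarrow> nat" where
  "n_van V' E' = card {C \<in> components V' E'. vanishing_comp C (comp_arcs E' C)}"

definition delta0 :: "nat \<Rightarrow> real" where
  "delta0 x = (if x = 0 then 1 else 0)"

end

theory Submission
  imports Defs "HOL-Combinatorics.Cycles" "HOL-Library.FuncSet"
begin

(* Since |omega5| = 1, L_omega = M M^* for the vertex-arc matrix M with entry 1 at the tail and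
   -cnj omega5 at the head of every arc.  By Cauchy-Binet, det L_omega[V'] is the sum, over the
   |V'|-sets F of arcs, of |det M[V',F]|^2, and only bijections V' -> F sending each vertex to an
   incident arc contribute.  This weight of (V',F) is multiplicative over its components, vanishes
   unless every component has as many arcs as vertices, and does not change when a pendant vertex
   is deleted together with its arc.  What remains of such a component is a cycle of length k with
   g backward arcs; its two incident bijections give 2 - 2 cos(2 pi (k - 2g) / 5), which is 0,
   sqrt 5 / phi or sqrt 5 * phi according as the component is vanishing, beta or alpha. *)

section \<open>Cauchy--Binet for the incidence factorisation\<close>

(* The entry of M at vertex i and arc e, in the factorisation L_omega = M M^*. *)
definition inc_entry :: "'a \<times> 'a \<Rightarrow> 'a \<Rightarrow> complex" where
  "inc_entry e i = (if i = fst e then 1 else if i = snd e then - cnj omega5 else 0)"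

definition ext_bij :: "'a set \<Rightarrow> ('a \<times> 'a) set \<Rightarrow> ('a \<Rightarrow> 'a \<times> 'a) set" where
  "ext_bij S F = {g. g \<in> extensional S \<and> bij_betw g S F}"

definition incident_bij :: "'a set \<Rightarrow> ('a \<times> 'a) set \<Rightarrow> ('a \<Rightarrow> 'a \<times> 'a) set" where
  "incident_bij S F = {g. g \<in> extensional S \<and> bij_betw g S F \<and> (\<forall>i\<in>S. fst (g i) = i \<or> snd (g i) = i)}"

definition bij_perm :: "'a set \<Rightarrow> ('a \<Rightarrow> 'a \<times> 'a) \<Rightarrow> ('a \<Rightarrow> 'a \<times> 'a) \<Rightarrow> 'a \<Rightarrow> 'a" where
  "bij_perm S g h = (\<lambda>x. if x \<in> S then inv_into S h (g x) else x)"

definition bij_term :: "'a set \<Rightarrow> ('a \<Rightarrow> 'a \<times> 'a) \<Rightarrow> ('a \<Rightarrow> 'a \<times> 'a) \<Rightarrow> complex" where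
  "bij_term S g h = of_int (sign (bij_perm S g h)) * (\<Prod>i\<in>S. inc_entry (g i) i * cnj (inc_entry (h i) i))"

(* |det M[S,F]|^2, written without choosing an ordering of F: rows and columns of M[S,F] are
   matched by bijections S -> F, and only those sending every vertex to an incident arc count. *)
definition inc_weight :: "'a set \<Rightarrow> ('a \<times> 'a) set \<Rightarrow> complex" where
  "inc_weight S F = (\<Sum>g\<in>incident_bij S F. \<Sum>h\<in>incident_bij S F. bij_term S g h)"

lemma cnj_omega5_mult: "cnj omega5 * omega5 = 1"
proof -
  have "cmod omega5 = 1" unfolding omega5_def by simp
  thus ?thesis using complex_norm_square[of omega5] by (simp add: mult.commute)
qed

lemma inc_entry_mult_cnj:
  "fst e \<noteq> snd e \<Longrightarrow> inc_entry e i * cnj (inc_entry e i) = (if i = fst e \<or> i = snd e then 1 else 0)"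
  unfolding inc_entry_def using cnj_omega5_mult by (auto simp: mult.commute)

lemma Lmat_eq_inc_entry_sum:
  assumes og: "oriented_graph V E" and "u \<in> V" "v \<in> V"
  shows "Lmat omega5 E u v = (\<Sum>e\<in>E. inc_entry e u * cnj (inc_entry e v))"
proof -
  have loopless: "fst e \<noteq> snd e" if "e \<in> E" for e
    using og that by (cases e) (auto simp: oriented_graph_def)
  have fE: "finite E" using og unfolding oriented_graph_def by (meson finite_SigmaI finite_subset)
  show ?thesis
  proof (cases "u = v")
    case True
    have "(\<Sum>e\<in>E. inc_entry e u * cnj (inc_entry e v)) = (\<Sum>e\<in>E. if fst e = u \<or> snd e = u then 1 else 0)"
      using True by (intro sum.cong[OF refl]) (simp add: inc_entry_mult_cnj loopless)
    also have "\<dots> = of_nat (card {e \<in> E. fst e = u \<or> snd e = u})"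
      by (simp add: sum.inter_filter[OF fE, symmetric])
    finally show ?thesis using True by (simp add: Lmat_def)
  next
    case False
    have "(\<Sum>e\<in>E. inc_entry e u * cnj (inc_entry e v)) =
          (\<Sum>e\<in>E. (if e = (u, v) then - omega5 else 0) + (if e = (v, u) then - cnj omega5 else 0))"
      using False by (intro sum.cong[OF refl]) (auto simp: inc_entry_def loopless)
    also have "\<dots> = (if (u, v) \<in> E then - omega5 else 0) + (if (v, u) \<in> E then - cnj omega5 else 0)"
      by (simp add: sum.distrib fE)
    finally show ?thesis using False og by (auto simp: Lmat_def oriented_graph_def)
  qed
qed

lemma det_on_identical_rows:
  assumes fin: "finite S" and ab: "a \<in> S" "b \<in> S" "a \<noteq> b" and rows: "\<And>j. N a j = N b j"
  shows "det_on S N = 0"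
proof -
  define t where "t = Transposition.transpose a b"
  define W where "W p = of_int (sign p) * (\<Prod>i\<in>S. N i (p i))" for p
  have tt: "t \<circ> t = id" unfolding t_def by (rule transpose_comp_involutory)
  have tp: "t permutes S" unfolding t_def using ab by (simp add: permutes_swap_id)
  have Nt: "N (t i) = N i" for i using rows unfolding t_def by (auto simp: transpose_def)
  have "sum W {p. p permutes S} = sum (\<lambda>p. W (p \<circ> t)) {p. p permutes S}"
    by (rule sum.reindex_bij_witness[where i="\<lambda>p. p \<circ> t" and j="\<lambda>p. p \<circ> t"])
       (use tt tp in \<open>auto simp: comp_assoc intro: permutes_compose\<close>)
  also have "\<dots> = sum (\<lambda>p. - W p) {p. p permutes S}"
  proof (rule sum.cong[OF refl])
    fix p assume "p \<in> {p. p permutes S}"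
    hence pp: "p permutes S" by simp
    have "sign (p \<circ> t) = - sign p"
      using pp tp fin ab(3) by (simp add: sign_compose permutes_imp_permutation t_def sign_swap_id)
    moreover have "(\<Prod>i\<in>S. N i ((p \<circ> t) i)) = (\<Prod>i\<in>S. N i (p i))"
      using prod.permute[OF tp, of "\<lambda>i. N i (p i)"] by (simp add: comp_def Nt)
    ultimately show "W (p \<circ> t) = - W p" unfolding W_def by simp
  qed
  finally have "sum W {p. p permutes S} = - sum W {p. p permutes S}" by (simp add: sum_negf)
  thus ?thesis unfolding W_def det_on_def by simp
qed

lemma perm_sum_not_inj:
  assumes fin: "finite S" and ni: "\<not> inj_on g S"
  shows "(\<Sum>p | p permutes S. of_int (sign p) * (\<Prod>i\<in>S. inc_entry (g i) i * cnj (inc_entry (g i) (p i)))) = 0"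
proof -
  obtain a b where ab: "a \<in> S" "b \<in> S" "a \<noteq> b" "g a = g b" using ni unfolding inj_on_def by blast
  have "det_on S (\<lambda>i j. cnj (inc_entry (g i) j)) = 0"
    by (rule det_on_identical_rows[OF fin ab(1-3)]) (simp add: ab(4))
  hence "(\<Prod>i\<in>S. inc_entry (g i) i) *
      (\<Sum>p | p permutes S. of_int (sign p) * (\<Prod>i\<in>S. cnj (inc_entry (g i) (p i)))) = 0"
    by (simp add: det_on_def)
  thus ?thesis by (simp add: prod.distrib sum_distrib_left mult.left_commute)
qed

lemma bij_perm_permutes:
  assumes "bij_betw g S F" "bij_betw h S F"
  shows "bij_perm S g h permutes S"
proof (rule bij_imp_permutes)
  have "bij_betw (inv_into S h) F S" using assms(2) by (rule bij_betw_inv_into)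
  hence "bij_betw (inv_into S h \<circ> g) S S" using assms(1) by (rule bij_betw_trans[rotated])
  thus "bij_betw (bij_perm S g h) S S"
    by (rule bij_betw_cong[THEN iffD1, rotated]) (simp add: bij_perm_def)
qed (simp add: bij_perm_def)

lemma bij_perm_permutation:
  "finite S \<Longrightarrow> bij_betw g S F \<Longrightarrow> bij_betw h S F \<Longrightarrow> permutation (bij_perm S g h)"
  using bij_perm_permutes permutes_imp_permutation by blast

lemma bij_perm_self: "inj_on g S \<Longrightarrow> bij_perm S g g = id"
  by (auto simp: bij_perm_def)

definition perm_bij :: "'a set \<Rightarrow> ('a \<Rightarrow> 'a \<times> 'a) \<Rightarrow> ('a \<Rightarrow> 'a) \<Rightarrow> 'a \<Rightarrow> 'a \<times> 'a" where
  "perm_bij S g p = (\<lambda>x. if x \<in> S then g (inv p x) else undefined)"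

lemma perm_bij_bij_betw:
  assumes "inj_on g S" "p permutes S"
  shows "bij_betw (perm_bij S g p) S (g ` S)"
proof -
  have "bij_betw (g \<circ> inv p) S (g ` S)"
    using permutes_imp_bij[OF permutes_inv[OF assms(2)]] inj_on_imp_bij_betw[OF assms(1)] by (rule bij_betw_trans)
  thus ?thesis by (rule bij_betw_cong[THEN iffD1, rotated]) (simp add: perm_bij_def)
qed

lemma perm_bij_in_ext_bij: "inj_on g S \<Longrightarrow> p permutes S \<Longrightarrow> perm_bij S g p \<in> ext_bij S (g ` S)"
  using perm_bij_bij_betw by (fastforce simp: ext_bij_def perm_bij_def extensional_def)

lemma bij_perm_perm_bij:
  assumes inj: "inj_on g S" and pp: "p permutes S"
  shows "bij_perm S g (perm_bij S g p) = p"
proof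
  fix x show "bij_perm S g (perm_bij S g p) x = p x"
  proof (cases "x \<in> S")
    case True
    have px: "p x \<in> S" using pp True by (simp add: permutes_in_image)
    have "perm_bij S g p (p x) = g x" using px by (simp add: perm_bij_def permutes_inverses(2)[OF pp])
    hence "inv_into S (perm_bij S g p) (g x) = p x"
      using perm_bij_bij_betw[OF inj pp] px by (metis bij_betw_def inv_into_f_eq)
    thus ?thesis using True by (simp add: bij_perm_def)
  next
    case False thus ?thesis using pp by (simp add: bij_perm_def permutes_not_in)
  qed
qed

lemma perm_bij_bij_perm:
  assumes inj: "inj_on g S" and h: "h \<in> ext_bij S (g ` S)"
  shows "perm_bij S g (bij_perm S g h) = h"
proof
  have hb: "bij_betw h S (g ` S)" and he: "h \<in> extensional S" using h by (auto simp: ext_bij_def)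
  have rp: "bij_perm S g h permutes S" using inj_on_imp_bij_betw[OF inj] hb by (rule bij_perm_permutes)
  fix x show "perm_bij S g (bij_perm S g h) x = h x"
  proof (cases "x \<in> S")
    case True
    define y where "y = inv (bij_perm S g h) x"
    have yS: "y \<in> S" using True permutes_in_image[OF permutes_inv[OF rp]] by (simp add: y_def)
    have "bij_perm S g h y = x" unfolding y_def using rp by (simp add: permutes_inverses(1))
    hence "inv_into S h (g y) = x" using yS by (simp add: bij_perm_def)
    moreover have "g y \<in> h ` S" using hb yS by (auto simp: bij_betw_def)
    ultimately have "h x = g y" by (metis f_inv_into_f)
    thus ?thesis using True by (simp add: perm_bij_def y_def)
  next
    case False thus ?thesis using he by (simp add: perm_bij_def extensional_def)
  qed
qed

lemma perm_sum_inj: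
  assumes fin: "finite S" and inj: "inj_on g S"
  shows "(\<Sum>p | p permutes S. of_int (sign p) * (\<Prod>i\<in>S. inc_entry (g i) i * cnj (inc_entry (g i) (p i))))
         = (\<Sum>h\<in>ext_bij S (g ` S). bij_term S g h)"
proof (rule sum.reindex_bij_witness[where j = "perm_bij S g" and i = "bij_perm S g"])
  fix p assume "p \<in> {p. p permutes S}"
  hence pp: "p permutes S" by simp
  have "(\<Prod>i\<in>S. cnj (inc_entry (perm_bij S g p i) i)) = (\<Prod>i\<in>S. cnj (inc_entry (perm_bij S g p (p i)) (p i)))"
    using prod.permute[OF pp, of "\<lambda>i. cnj (inc_entry (perm_bij S g p i) i)"] by (simp add: comp_def)
  also have "\<dots> = (\<Prod>i\<in>S. cnj (inc_entry (g i) (p i)))"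
    by (rule prod.cong[OF refl]) (simp add: perm_bij_def permutes_in_image[OF pp] permutes_inverses(2)[OF pp])
  finally show "bij_term S g (perm_bij S g p) = of_int (sign p) * (\<Prod>i\<in>S. inc_entry (g i) i * cnj (inc_entry (g i) (p i)))"
    unfolding bij_term_def bij_perm_perm_bij[OF inj pp] by (simp add: prod.distrib)
  show "perm_bij S g p \<in> ext_bij S (g ` S)" "bij_perm S g (perm_bij S g p) = p"
    using perm_bij_in_ext_bij[OF inj pp] bij_perm_perm_bij[OF inj pp] by auto
next
  fix h assume h: "h \<in> ext_bij S (g ` S)"
  thus "perm_bij S g (bij_perm S g h) = h" by (rule perm_bij_bij_perm[OF inj])
  show "bij_perm S g h \<in> {p. p permutes S}"
    using h bij_perm_permutes[OF inj_on_imp_bij_betw[OF inj]] by (auto simp: ext_bij_def)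
qed

lemma bij_term_not_incident:
  assumes "finite S" and "i \<in> S" "fst (g i) \<noteq> i \<and> snd (g i) \<noteq> i \<or> fst (h i) \<noteq> i \<and> snd (h i) \<noteq> i"
  shows "bij_term S g h = 0"
proof -
  have "inc_entry (g i) i * cnj (inc_entry (h i) i) = 0" using assms(3) by (auto simp: inc_entry_def)
  hence "(\<Prod>i\<in>S. inc_entry (g i) i * cnj (inc_entry (h i) i)) = 0"
    using assms(1,2) by (meson prod_zero)
  thus ?thesis unfolding bij_term_def by simp
qed

lemma bij_term_self:
  assumes g: "g \<in> incident_bij S F" and loopless: "\<forall>a\<in>F. fst a \<noteq> snd a"
  shows "bij_term S g g = 1"
proof -
  have ig: "inj_on g S" and gF: "\<forall>i\<in>S. g i \<in> F" and inc: "\<forall>i\<in>S. fst (g i) = i \<or> snd (g i) = i"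
    using g by (auto simp: incident_bij_def bij_betw_def)
  have "inc_entry (g i) i * cnj (inc_entry (g i) i) = 1" if "i \<in> S" for i
    using inc_entry_mult_cnj[of "g i" i] gF loopless inc that by auto
  thus ?thesis unfolding bij_term_def bij_perm_self[OF ig] by simp
qed

lemma bij_term_swap:
  assumes fS: "finite S" and g: "g \<in> incident_bij S F" and h: "h \<in> incident_bij S F"
  shows "bij_term S h g = cnj (bij_term S g h)"
proof -
  have bg: "bij_betw g S F" and bh: "bij_betw h S F" using g h by (auto simp: incident_bij_def)
  have comp: "bij_perm S h g \<circ> bij_perm S g h = id"
  proof
    fix x show "(bij_perm S h g \<circ> bij_perm S g h) x = id x"
    proof (cases "x \<in> S")
      case True
      have gx: "g x \<in> h ` S" using bg bh True by (auto simp: bij_betw_def)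
      hence "inv_into S h (g x) \<in> S" "h (inv_into S h (g x)) = g x" by (auto intro: inv_into_into f_inv_into_f)
      moreover have "inv_into S g (g x) = x" using True bg by (simp add: bij_betw_def)
      ultimately show ?thesis using True by (simp add: bij_perm_def)
    qed (simp add: bij_perm_def)
  qed
  have "sign (bij_perm S h g) * sign (bij_perm S g h) = 1"
    using sign_compose[OF bij_perm_permutation[OF fS bh bg] bij_perm_permutation[OF fS bg bh]] comp by simp
  hence "sign (bij_perm S h g) = sign (bij_perm S g h)"
    by (metis mult.assoc mult.right_neutral sign_idempotent)
  thus ?thesis unfolding bij_term_def by (simp add: mult.commute)
qed

lemma finite_ext_bij: "finite S \<Longrightarrow> finite F \<Longrightarrow> finite (ext_bij S F)"
proof (rule finite_subset[of _ "PiE S (\<lambda>_. F)"])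
  show "ext_bij S F \<subseteq> PiE S (\<lambda>_. F)" by (auto simp: ext_bij_def PiE_iff bij_betw_def extensional_def)
qed (auto intro: finite_PiE)

lemma incident_bij_subset: "incident_bij S F \<subseteq> ext_bij S F"
  by (auto simp: incident_bij_def ext_bij_def)

lemma ext_bij_sum_eq_inc_weight:
  assumes "finite S" "finite F"
  shows "(\<Sum>g\<in>ext_bij S F. \<Sum>h\<in>ext_bij S F. bij_term S g h) = inc_weight S F"
proof -
  have zero: "bij_term S g h = 0" if "g \<in> ext_bij S F - incident_bij S F \<or> h \<in> ext_bij S F - incident_bij S F" for g h
    using that assms(1) bij_term_not_incident[of S _ g h]
    by (auto simp: ext_bij_def incident_bij_def)
  have "(\<Sum>g\<in>ext_bij S F. \<Sum>h\<in>ext_bij S F. bij_term S g h) = (\<Sum>g\<in>ext_bij S F. \<Sum>h\<in>incident_bij S F. bij_term S g h)"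
    by (rule sum.cong[OF refl], rule sum.mono_neutral_right)
       (use assms zero in \<open>auto simp: finite_ext_bij incident_bij_subset\<close>)
  also have "\<dots> = inc_weight S F" unfolding inc_weight_def
    by (rule sum.mono_neutral_right) (use assms zero in \<open>auto simp: finite_ext_bij incident_bij_subset\<close>)
  finally show ?thesis .
qed

lemma det_on_inc_entry_sum:
  assumes fS: "finite S" and fE: "finite E"
  shows "det_on S (\<lambda>i j. \<Sum>e\<in>E. inc_entry e i * cnj (inc_entry e j))
     = (\<Sum>F | F \<subseteq> E \<and> card F = card S. inc_weight S F)"
proof -
  define P where "P = PiE S (\<lambda>_. E)"
  define I where "I = {g\<in>P. inj_on g S}"
  define Fs where "Fs = {F. F \<subseteq> E \<and> card F = card S}"
  define summand where "summand g p = of_int (sign p) * (\<Prod>i\<in>S. inc_entry (g i) i * cnj (inc_entry (g i) (p i)))"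
    for g p
  have fP: "finite P" unfolding P_def using fS fE by (simp add: finite_PiE)
  have fI: "finite I" unfolding I_def using fP by simp
  have fFs: "finite Fs" unfolding Fs_def using fE by simp
  have "det_on S (\<lambda>i j. \<Sum>e\<in>E. inc_entry e i * cnj (inc_entry e j))
     = (\<Sum>p | p permutes S. of_int (sign p) * (\<Sum>g\<in>P. \<Prod>i\<in>S. inc_entry (g i) i * cnj (inc_entry (g i) (p i))))"
    unfolding det_on_def P_def by (subst prod_sum_PiE) (use fS fE in auto)
  also have "\<dots> = (\<Sum>g\<in>P. \<Sum>p | p permutes S. summand g p)"
    by (simp add: summand_def sum_distrib_left sum.swap[of _ _ P])
  also have "\<dots> = (\<Sum>g\<in>P. if inj_on g S then (\<Sum>h\<in>ext_bij S (g ` S). bij_term S g h) else 0)"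
    by (rule sum.cong[OF refl]) (simp add: summand_def perm_sum_inj perm_sum_not_inj fS)
  also have "\<dots> = (\<Sum>g\<in>I. \<Sum>h\<in>ext_bij S (g ` S). bij_term S g h)"
    unfolding I_def by (simp add: sum.inter_filter[OF fP, symmetric])
  also have "\<dots> = (\<Sum>F\<in>Fs. \<Sum>g | g \<in> I \<and> g ` S = F. \<Sum>h\<in>ext_bij S (g ` S). bij_term S g h)"
    by (rule sum.group[symmetric, OF fI fFs]) (auto simp: I_def P_def Fs_def card_image PiE_iff)
  also have "\<dots> = (\<Sum>F\<in>Fs. \<Sum>g\<in>ext_bij S F. \<Sum>h\<in>ext_bij S F. bij_term S g h)"
  proof (rule sum.cong[OF refl])
    fix F assume "F \<in> Fs"
    hence "{g. g \<in> I \<and> g ` S = F} = ext_bij S F"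
      by (auto simp: Fs_def I_def P_def ext_bij_def PiE_iff bij_betw_def)
    thus "(\<Sum>g | g \<in> I \<and> g ` S = F. \<Sum>h\<in>ext_bij S (g ` S). bij_term S g h)
        = (\<Sum>g\<in>ext_bij S F. \<Sum>h\<in>ext_bij S F. bij_term S g h)"
      by (auto intro!: sum.cong)
  qed
  also have "\<dots> = (\<Sum>F\<in>Fs. inc_weight S F)"
    by (rule sum.cong[OF refl], rule ext_bij_sum_eq_inc_weight[OF fS])
       (use fE in \<open>auto simp: Fs_def intro: finite_subset\<close>)
  finally show ?thesis unfolding Fs_def .
qed

section \<open>Multiplicativity over separated pieces\<close>

definition glue :: "'a set \<Rightarrow> ('a \<Rightarrow> 'b) \<Rightarrow> ('a \<Rightarrow> 'b) \<Rightarrow> 'a \<Rightarrow> 'b" where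
  "glue S1 g1 g2 = (\<lambda>x. if x \<in> S1 then g1 x else g2 x)"

lemma glue_incident_bij:
  assumes "g1 \<in> incident_bij S1 F1" "g2 \<in> incident_bij S2 F2" "S1 \<inter> S2 = {}" "F1 \<inter> F2 = {}"
  shows "glue S1 g1 g2 \<in> incident_bij (S1 \<union> S2) (F1 \<union> F2)"
proof -
  have "bij_betw (glue S1 g1 g2) (S1 \<union> S2) (F1 \<union> F2)"
    unfolding glue_def using assms by (intro bij_betw_disjoint_Un) (auto simp: incident_bij_def)
  thus ?thesis using assms(1,2) by (auto simp: incident_bij_def glue_def extensional_def)
qed

lemma bij_betw_glue_incident_bij:
  assumes fF1: "finite F1" and dS: "S1 \<inter> S2 = {}" and dF: "F1 \<inter> F2 = {}"
    and cS: "card S1 = card F1"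
    and sep: "\<forall>g\<in>incident_bij (S1 \<union> S2) (F1 \<union> F2). g ` S1 \<subseteq> F1"
  shows "bij_betw (\<lambda>(g1, g2). glue S1 g1 g2) (incident_bij S1 F1 \<times> incident_bij S2 F2)
           (incident_bij (S1 \<union> S2) (F1 \<union> F2))"
proof (rule bij_betwI')
  fix p q assume "p \<in> incident_bij S1 F1 \<times> incident_bij S2 F2" "q \<in> incident_bij S1 F1 \<times> incident_bij S2 F2"
  then obtain g1 g2 h1 h2 where pq: "p = (g1, g2)" "q = (h1, h2)"
    and ext: "g1 \<in> extensional S1" "h1 \<in> extensional S1" "g2 \<in> extensional S2" "h2 \<in> extensional S2"
    by (auto simp: incident_bij_def)
  show "((\<lambda>(g1, g2). glue S1 g1 g2) p = (\<lambda>(g1, g2). glue S1 g1 g2) q) = (p = q)"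
  proof
    assume eq: "(\<lambda>(g1, g2). glue S1 g1 g2) p = (\<lambda>(g1, g2). glue S1 g1 g2) q"
    have "g1 x = h1 x \<and> g2 x = h2 x" for x
      using fun_cong[OF eq, of x] pq ext dS
      by (cases "x \<in> S1"; cases "x \<in> S2") (auto simp: glue_def extensional_def)
    thus "p = q" using pq by auto
  qed simp
next
  fix p assume "p \<in> incident_bij S1 F1 \<times> incident_bij S2 F2"
  thus "(\<lambda>(g1, g2). glue S1 g1 g2) p \<in> incident_bij (S1 \<union> S2) (F1 \<union> F2)"
    using glue_incident_bij dS dF by auto
next
  fix g assume g: "g \<in> incident_bij (S1 \<union> S2) (F1 \<union> F2)"
  have bg: "bij_betw g (S1 \<union> S2) (F1 \<union> F2)" and ig: "inj_on g (S1 \<union> S2)"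
    using g by (auto simp: incident_bij_def bij_betw_def)
  have im1: "g ` S1 = F1"
    by (rule card_subset_eq[OF fF1]) (use sep g cS ig in \<open>auto simp: card_image inj_on_subset\<close>)
  have im2: "g ` S2 = F2"
  proof -
    have "g ` S1 \<union> g ` S2 = F1 \<union> F2" using bg by (auto simp: bij_betw_def)
    moreover have "g ` S1 \<inter> g ` S2 = {}" using inj_on_image_Int[OF ig, of S1 S2] dS by auto
    ultimately show ?thesis using im1 dF by blast
  qed
  have "restrict g S1 \<in> incident_bij S1 F1" "restrict g S2 \<in> incident_bij S2 F2"
    using g im1 im2 ig unfolding incident_bij_def
    by (auto intro!: bij_betw_imageI inj_on_subset[OF ig] cong: bij_betw_cong)
  moreover have "glue S1 (restrict g S1) (restrict g S2) = g"
    using g by (auto simp: glue_def incident_bij_def extensional_def)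
  ultimately show "\<exists>p\<in>incident_bij S1 F1 \<times> incident_bij S2 F2. g = (\<lambda>(g1, g2). glue S1 g1 g2) p"
    by force
qed

lemma bij_perm_glue:
  assumes dS: "S1 \<inter> S2 = {}" and dF: "F1 \<inter> F2 = {}"
    and b: "bij_betw g1 S1 F1" "bij_betw h1 S1 F1" "bij_betw g2 S2 F2" "bij_betw h2 S2 F2"
  shows "bij_perm (S1 \<union> S2) (glue S1 g1 g2) (glue S1 h1 h2) = bij_perm S1 g1 h1 \<circ> bij_perm S2 g2 h2"
proof
  fix x
  have inj: "inj_on (glue S1 h1 h2) (S1 \<union> S2)"
    using bij_betw_disjoint_Un[OF b(2,4) dS dF] by (simp add: glue_def bij_betw_def)
  have inv: "inv_into (S1 \<union> S2) (glue S1 h1 h2) (g x) = inv_into S h (g x)"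
    if "bij_betw g S F" "bij_betw h S F" "x \<in> S" "S \<subseteq> S1 \<union> S2" "\<forall>y\<in>S. glue S1 h1 h2 y = h y" for g h S F
  proof (rule inv_into_f_eq[OF inj])
    have gx: "g x \<in> h ` S" using that(1-3) by (auto simp: bij_betw_def)
    hence yS: "inv_into S h (g x) \<in> S" by (rule inv_into_into)
    thus "inv_into S h (g x) \<in> S1 \<union> S2" using that(4) by blast
    show "glue S1 h1 h2 (inv_into S h (g x)) = g x" using yS gx that(5) by (simp add: f_inv_into_f)
  qed
  show "bij_perm (S1 \<union> S2) (glue S1 g1 g2) (glue S1 h1 h2) x = (bij_perm S1 g1 h1 \<circ> bij_perm S2 g2 h2) x"
  proof (cases "x \<in> S1")
    case True
    have "\<forall>y\<in>S1. glue S1 h1 h2 y = h1 y" by (simp add: glue_def)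
    moreover have "x \<notin> S2" using True dS by blast
    ultimately show ?thesis using inv[OF b(1,2) True] True by (simp add: bij_perm_def glue_def)
  next
    case notS1: False
    show ?thesis
    proof (cases "x \<in> S2")
      case True
      have "g2 x \<in> h2 ` S2" using b(3,4) True by (auto simp: bij_betw_def)
      hence "inv_into S2 h2 (g2 x) \<in> S2" by (rule inv_into_into)
      hence "inv_into S2 h2 (g2 x) \<notin> S1" using dS by blast
      moreover have "\<forall>y\<in>S2. glue S1 h1 h2 y = h2 y" using dS by (auto simp: glue_def)
      ultimately show ?thesis using inv[OF b(3,4) True] True notS1 by (simp add: bij_perm_def glue_def)
    qed (use notS1 in \<open>simp add: bij_perm_def\<close>)
  qed
qed

lemma bij_term_glue:
  assumes fS: "finite S1" "finite S2" and dS: "S1 \<inter> S2 = {}" and dF: "F1 \<inter> F2 = {}"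
    and b: "bij_betw g1 S1 F1" "bij_betw h1 S1 F1" "bij_betw g2 S2 F2" "bij_betw h2 S2 F2"
  shows "bij_term (S1 \<union> S2) (glue S1 g1 g2) (glue S1 h1 h2) = bij_term S1 g1 h1 * bij_term S2 g2 h2"
proof -
  have "sign (bij_perm (S1 \<union> S2) (glue S1 g1 g2) (glue S1 h1 h2)) = sign (bij_perm S1 g1 h1) * sign (bij_perm S2 g2 h2)"
    unfolding bij_perm_glue[OF dS dF b]
    by (rule sign_compose) (use fS b in \<open>auto intro: bij_perm_permutation\<close>)
  moreover have "(\<Prod>i\<in>S1 \<union> S2. inc_entry (glue S1 g1 g2 i) i * cnj (inc_entry (glue S1 h1 h2 i) i))
      = (\<Prod>i\<in>S1. inc_entry (g1 i) i * cnj (inc_entry (h1 i) i)) * (\<Prod>i\<in>S2. inc_entry (g2 i) i * cnj (inc_entry (h2 i) i))"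
    unfolding prod.union_disjoint[OF fS dS] using dS
    by (auto simp: glue_def intro!: prod.cong arg_cong2[where f = "(*)"])
  ultimately show ?thesis unfolding bij_term_def by (simp add: algebra_simps)
qed

lemma sum_sum_product_pairs:
  fixes f g :: "'a \<Rightarrow> 'a \<Rightarrow> 'c::comm_semiring_1"
  shows "(\<Sum>p\<in>A \<times> B. \<Sum>q\<in>A \<times> B. f (fst p) (fst q) * g (snd p) (snd q))
       = (\<Sum>x\<in>A. \<Sum>y\<in>A. f x y) * (\<Sum>x\<in>B. \<Sum>y\<in>B. g x y)"
proof -
  have pairs: "(\<Sum>p\<in>A \<times> B. H p) = (\<Sum>u\<in>A. \<Sum>v\<in>B. H (u, v))" for H :: "'a \<times> 'a \<Rightarrow> 'c"
    by (simp add: sum.cartesian_product)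
  have "(\<Sum>p\<in>A \<times> B. \<Sum>q\<in>A \<times> B. f (fst p) (fst q) * g (snd p) (snd q))
      = (\<Sum>u\<in>A. \<Sum>v\<in>B. \<Sum>x\<in>A. \<Sum>y\<in>B. f u x * g v y)"
    by (simp only: pairs fst_conv snd_conv)
  also have "\<dots> = (\<Sum>u\<in>A. \<Sum>v\<in>B. (\<Sum>x\<in>A. f u x) * (\<Sum>y\<in>B. g v y))"
    by (simp add: sum_product)
  finally show ?thesis by (simp add: sum_product)
qed

lemma inc_weight_split:
  assumes fS: "finite S1" "finite S2" and fF: "finite F1"
    and dS: "S1 \<inter> S2 = {}" and dF: "F1 \<inter> F2 = {}" and cS: "card S1 = card F1"
    and sep: "\<forall>g\<in>incident_bij (S1 \<union> S2) (F1 \<union> F2). g ` S1 \<subseteq> F1"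
  shows "inc_weight (S1 \<union> S2) (F1 \<union> F2) = inc_weight S1 F1 * inc_weight S2 F2"
proof -
  let ?B = "incident_bij S1 F1 \<times> incident_bij S2 F2"
  let ?glue = "\<lambda>(g1, g2). glue S1 g1 g2"
  have "inc_weight (S1 \<union> S2) (F1 \<union> F2) = (\<Sum>p\<in>?B. \<Sum>q\<in>?B. bij_term (S1 \<union> S2) (?glue p) (?glue q))"
    unfolding inc_weight_def
    by (simp add: sum.reindex_bij_betw[OF bij_betw_glue_incident_bij[OF fF dS dF cS sep], symmetric])
  also have "\<dots> = (\<Sum>p\<in>?B. \<Sum>q\<in>?B. bij_term S1 (fst p) (fst q) * bij_term S2 (snd p) (snd q))"
    using bij_term_glue[OF fS dS dF] by (intro sum.cong refl) (auto simp: incident_bij_def)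
  also have "\<dots> = inc_weight S1 F1 * inc_weight S2 F2"
    unfolding inc_weight_def by (rule sum_sum_product_pairs)
  finally show ?thesis .
qed

lemma inc_weight_empty: "inc_weight ({} :: 'a set) {} = 1"
proof -
  have "incident_bij ({} :: 'a set) {} = {\<lambda>_. undefined}" by (auto simp: incident_bij_def extensional_def bij_betw_def)
  moreover have "bij_perm ({} :: 'a set) (\<lambda>_. undefined) (\<lambda>_. undefined) = id" by (auto simp: bij_perm_def)
  ultimately show ?thesis by (simp add: inc_weight_def bij_term_def)
qed

lemma inc_weight_isolated:
  assumes "v \<in> S" "\<forall>e\<in>F. fst e \<noteq> v \<and> snd e \<noteq> v"
  shows "inc_weight S F = 0"
proof -
  have "incident_bij S F = {}" using assms by (fastforce simp: incident_bij_def bij_betw_def)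
  thus ?thesis by (simp add: inc_weight_def)
qed

lemma inc_weight_single:
  assumes "fst e \<noteq> snd e" "v = fst e \<or> v = snd e"
  shows "inc_weight {v} {e} = 1"
proof -
  have "incident_bij {v} {e} = {(\<lambda>x. if x = v then e else undefined)}"
    using assms(2) by (auto simp: incident_bij_def extensional_def bij_betw_def)
  thus ?thesis using inc_entry_mult_cnj[OF assms(1), of v] assms(2)
    by (auto simp: inc_weight_def bij_term_def bij_perm_self)
qed

section \<open>The weight of a substructure\<close>

definition phi :: real where "phi = (1 + sqrt 5) / 2"

definition ab_weight :: "nat \<Rightarrow> nat \<Rightarrow> real" where
  "ab_weight a b = sqrt 5 ^ (a + b) * phi powi (int a - int b)"

definition sub_weight :: "'a set \<Rightarrow> ('a \<times> 'a) set \<Rightarrow> real" where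
  "sub_weight S F =
     (if all_regular S F then delta0 (n_van S F) * ab_weight (n_alpha S F) (n_beta S F) else 0)"

definition comp_weight :: "'a set \<Rightarrow> ('a \<times> 'a) set \<Rightarrow> real" where
  "comp_weight C A = (if card C = card A \<and> \<not> vanishing_comp C A then
     (if alpha_comp C A then sqrt 5 * phi else 1) * (if beta_comp C A then sqrt 5 / phi else 1) else 0)"

lemma phi_gt_1: "phi > 1"
  by (simp add: phi_def)

lemma ab_weight_Suc_left: "ab_weight (Suc a) b = ab_weight a b * (sqrt 5 * phi)"
proof -
  have "phi powi (int (Suc a) - int b) = phi powi ((int a - int b) + 1)" by (simp add: algebra_simps)
  also have "\<dots> = phi powi (int a - int b) * phi" using phi_gt_1 by (simp add: power_int_add)
  finally show ?thesis by (simp add: ab_weight_def algebra_simps)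
qed

lemma ab_weight_Suc_right: "ab_weight a (Suc b) = ab_weight a b * (sqrt 5 / phi)"
proof -
  have "phi powi (int a - int (Suc b)) = phi powi ((int a - int b) + (-1))" by (simp add: algebra_simps)
  also have "\<dots> = phi powi (int a - int b) * phi powi (-1)" using phi_gt_1 by (intro power_int_add) simp
  also have "\<dots> = phi powi (int a - int b) / phi" by (simp add: power_int_minus field_simps)
  finally show ?thesis by (simp add: ab_weight_def algebra_simps)
qed

lemma sub_conn_equiv: "equiv S (sub_conn S F)"
proof -
  have "sym ((sub_adj S F)\<^sup>*)" by (rule sym_rtrancl) (auto simp: sym_def sub_adj_def)
  thus ?thesis
    unfolding equiv_def refl_on_def sym_def trans_def sub_conn_def by (auto intro: rtrancl_trans)
qed

lemma sub_adj_imp_sub_conn: "(x, y) \<in> sub_adj S F \<Longrightarrow> (x, y) \<in> sub_conn S F"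
  by (auto simp: sub_conn_def sub_adj_def)

lemma sub_conn_mono: "S' \<subseteq> S \<Longrightarrow> F' \<subseteq> F \<Longrightarrow> sub_conn S' F' \<subseteq> sub_conn S F"
proof -
  assume "S' \<subseteq> S" "F' \<subseteq> F"
  hence "(sub_adj S' F')\<^sup>* \<subseteq> (sub_adj S F)\<^sup>*" by (intro rtrancl_mono) (auto simp: sub_adj_def)
  thus ?thesis using \<open>S' \<subseteq> S\<close> by (auto simp: sub_conn_def)
qed

lemma finite_components: "finite S \<Longrightarrow> finite (components S F)"
  unfolding components_def by (rule finite_quotient) (auto simp: sub_conn_def)

lemma components_subset: "C \<in> components S F \<Longrightarrow> C \<subseteq> S"
  unfolding components_def using sub_conn_equiv by (rule in_quotient_imp_subset)

lemma components_closed: "C \<in> components S F \<Longrightarrow> x \<in> C \<Longrightarrow> (x, y) \<in> sub_conn S F \<Longrightarrow> y \<in> C"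
  unfolding components_def using sub_conn_equiv by (rule in_quotient_imp_closed)

lemma component_of: "x \<in> S \<Longrightarrow> sub_conn S F `` {x} \<in> components S F"
  unfolding components_def by (rule quotientI)

lemma isolated_component:
  assumes vS: "v \<in> S" and iso: "\<forall>y. (v, y) \<notin> sub_adj S F"
  shows "{v} \<in> components S F"
proof -
  have "sub_conn S F `` {v} = {v}"
    using vS iso by (auto simp: sub_conn_def elim: converse_rtranclE)
  thus ?thesis using component_of[OF vS, of F] by simp
qed

lemma sub_conn_remove_component:
  assumes C: "C \<in> components S F"
  shows "sub_conn (S - C) (F - comp_arcs F C) = sub_conn S F \<inter> ((S - C) \<times> (S - C))"
proof
  show "sub_conn (S - C) (F - comp_arcs F C) \<subseteq> sub_conn S F \<inter> ((S - C) \<times> (S - C))"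
    using sub_conn_mono[of "S - C" S "F - comp_arcs F C" F] by (auto simp: sub_conn_def)
  have "z \<in> S - C \<and> (x, z) \<in> (sub_adj (S - C) (F - comp_arcs F C))\<^sup>*"
    if "(x, z) \<in> (sub_adj S F)\<^sup>*" "x \<in> S - C" for x z
    using that(1)
  proof (induction rule: rtrancl_induct)
    case (step y z)
    have "z \<notin> C"
      using components_closed[OF C, of z y] step.hyps(2) step.IH
      by (auto simp: sub_conn_def sub_adj_def)
    hence yz: "(y, z) \<in> sub_adj (S - C) (F - comp_arcs F C)"
      using step.hyps(2) step.IH by (auto simp: sub_adj_def comp_arcs_def)
    hence "z \<in> S - C" by (simp add: sub_adj_def)
    thus ?case using rtrancl_into_rtrancl[OF conjunct2[OF step.IH] yz] by blast
  qed (use that(2) in simp)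
  thus "sub_conn S F \<inter> ((S - C) \<times> (S - C)) \<subseteq> sub_conn (S - C) (F - comp_arcs F C)"
    by (auto simp: sub_conn_def)
qed

lemma components_remove_component:
  assumes C: "C \<in> components S F"
  shows "components (S - C) (F - comp_arcs F C) = components S F - {C}"
proof -
  let ?R = "sub_conn S F"
  have CS: "C \<subseteq> S" by (rule components_subset[OF C])
  obtain c where c: "c \<in> S" "C = ?R `` {c}" using C unfolding components_def by (blast elim: quotientE)
  have disj: "?R `` {x} \<inter> C = {}" if "x \<in> S - C" for x
    using that components_closed[OF C, of _ x] sub_conn_equiv[of S F] by (auto simp: equiv_def sym_def)
  have cls: "sub_conn (S - C) (F - comp_arcs F C) `` {x} = ?R `` {x}" if "x \<in> S - C" for x
    using disj[OF that] that unfolding sub_conn_remove_component[OF C] by (auto simp: sub_conn_def)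
  have self: "?R `` {x} = C \<longleftrightarrow> x \<in> C" if "x \<in> S" for x
  proof
    assume "?R `` {x} = C" thus "x \<in> C" using equiv_class_self[OF sub_conn_equiv that] by blast
  next
    assume "x \<in> C"
    hence "(c, x) \<in> ?R" using c by simp
    thus "?R `` {x} = C" using equiv_class_eq[OF sub_conn_equiv] c(2) by metis
  qed
  show ?thesis
    unfolding components_def quotient_def using cls self by auto
qed

lemma comp_arcs_remove_component:
  assumes C: "C \<in> components S F" and D: "D \<in> components (S - C) (F - comp_arcs F C)"
  shows "comp_arcs (F - comp_arcs F C) D = comp_arcs F D"
proof -
  have D': "D \<in> components S F" "D \<noteq> C" using D unfolding components_remove_component[OF C] by auto
  have disj: "D \<inter> C = {}"
    using quotient_disj[OF sub_conn_equiv] C D' unfolding components_def by blast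
  have closed: "y \<in> D" if "x \<in> D" "y \<in> C" "(x, y) \<in> F \<or> (y, x) \<in> F" for x y
  proof -
    have "(x, y) \<in> sub_conn S F"
      using that components_subset[OF D'(1)] components_subset[OF C]
      by (intro sub_adj_imp_sub_conn) (auto simp: sub_adj_def)
    thus "y \<in> D" by (rule components_closed[OF D'(1) that(1)])
  qed
  have "a \<notin> comp_arcs F C" if a: "a \<in> comp_arcs F D" for a
  proof
    assume "a \<in> comp_arcs F C"
    then obtain x y where "x \<in> D" "y \<in> C" "(x, y) \<in> F \<or> (y, x) \<in> F"
      using a disj by (cases a) (auto simp: comp_arcs_def)
    thus False using closed disj by blast
  qed
  thus ?thesis by (auto simp: comp_arcs_def)
qed

lemma card_filter_insert:
  assumes "finite X" "C \<notin> X"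
  shows "card {D \<in> insert C X. P D} = card {D \<in> X. P D} + (if P C then 1 else 0)"
proof (cases "P C")
  case True
  hence "{D \<in> insert C X. P D} = insert C {D \<in> X. P D}" by auto
  thus ?thesis using assms True by simp
next
  case False
  hence "{D \<in> insert C X. P D} = {D \<in> X. P D}" by auto
  thus ?thesis using False by simp
qed

lemma sub_weight_remove_component:
  assumes fS: "finite S" and C: "C \<in> components S F"
  shows "sub_weight S F = comp_weight C (comp_arcs F C) * sub_weight (S - C) (F - comp_arcs F C)"
proof -
  define S' where "S' = S - C"
  define F' where "F' = F - comp_arcs F C"
  have cs: "components S F = insert C (components S' F')" and nin: "C \<notin> components S' F'"
    using components_remove_component[OF C] C by (auto simp: S'_def F'_def)
  have ca: "\<forall>D\<in>components S' F'. comp_arcs F' D = comp_arcs F D"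
    using comp_arcs_remove_component[OF C] by (simp add: S'_def F'_def)
  have fc: "finite (components S' F')" using fS by (simp add: finite_components S'_def)
  have count: "card {D \<in> components S F. P D (comp_arcs F D)}
      = card {D \<in> components S' F'. P D (comp_arcs F' D)} + (if P C (comp_arcs F C) then 1 else 0)" for P
    unfolding cs card_filter_insert[OF fc nin] using ca by (metis (no_types, lifting))
  have ar: "all_regular S F \<longleftrightarrow> card C = card (comp_arcs F C) \<and> all_regular S' F'"
    unfolding all_regular_def cs using ca by auto
  show ?thesis
    unfolding sub_weight_def comp_weight_def ar n_alpha_def n_beta_def n_van_def count
      S'_def[symmetric] F'_def[symmetric]
    by (auto simp: delta0_def ab_weight_Suc_left ab_weight_Suc_right algebra_simps
        simp flip: n_alpha_def n_beta_def n_van_def)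
qed

lemma sub_weight_empty: "sub_weight ({} :: 'a set) {} = 1"
  by (simp add: sub_weight_def all_regular_def n_alpha_def n_beta_def n_van_def delta0_def
      ab_weight_def components_def)

lemma sub_weight_isolated:
  assumes fS: "finite S" and vS: "v \<in> S" and na: "\<forall>a\<in>F. fst a \<noteq> v \<and> snd a \<noteq> v"
  shows "sub_weight S F = 0"
proof -
  have "{v} \<in> components S F" using na by (intro isolated_component[OF vS]) (auto simp: sub_adj_def)
  moreover have "comp_arcs F {v} = {}" using na by (auto simp: comp_arcs_def)
  ultimately show ?thesis using sub_weight_remove_component[OF fS] by (fastforce simp: comp_weight_def)
qed

section \<open>Cyclic vertex lists\<close>

lemma pred_mod_eq:
  fixes j k :: nat assumes "j < k"
  shows "(j + k - 1) mod k = (if j = 0 then k - 1 else j - 1)"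
proof (cases "j = 0")
  case False
  hence "(j + k - 1) mod k = ((j - 1) + k) mod k" by (metis Nat.add_diff_assoc2 One_nat_def Suc_leI neq0_conv)
  also have "\<dots> = j - 1" using assms by simp
  finally show ?thesis using False by simp
qed (use assms in simp)

lemma succ_mod_eq: fixes j k :: nat shows "j < k \<Longrightarrow> (j + 1) mod k = (if j + 1 = k then 0 else j + 1)"
  by auto

lemma succ_pred_mod: fixes j k :: nat shows "j < k \<Longrightarrow> ((j + k - 1) mod k + 1) mod k = j"
  using pred_mod_eq[of j k] succ_mod_eq[of "(j + k - 1) mod k" k] by (auto split: if_splits)

lemma pred_succ_mod: fixes j k :: nat shows "j < k \<Longrightarrow> ((j + 1) mod k + k - 1) mod k = j"
  using pred_mod_eq[of "(j + 1) mod k" k] succ_mod_eq[of j k] by (auto split: if_splits)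

lemma succ_mod_neq: fixes j k :: nat shows "3 \<le> k \<Longrightarrow> j < k \<Longrightarrow> (j + 1) mod k \<noteq> j"
  using succ_mod_eq[of j k] by auto

lemma pred_mod_neq: fixes j k :: nat shows "3 \<le> k \<Longrightarrow> j < k \<Longrightarrow> (j + k - 1) mod k \<noteq> j"
  using pred_mod_eq[of j k] by auto

lemma pred_mod_neq_succ_mod: fixes j k :: nat shows "3 \<le> k \<Longrightarrow> j < k \<Longrightarrow> (j + k - 1) mod k \<noteq> (j + 1) mod k"
  using pred_mod_eq[of j k] succ_mod_eq[of j k] by (auto split: if_splits)

lemma succ_mod_length_less: "j < length ws \<Longrightarrow> (j + 1) mod length ws < length ws"
  by (metis le_less_trans[OF le0] mod_less_divisor)

lemma pred_mod_length_less: "j < length ws \<Longrightarrow> (j + length ws - 1) mod length ws < length ws"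
  by (metis le_less_trans[OF le0] mod_less_divisor)

lemma cycle_list_joined_succ:
  "cycle_list A ws \<Longrightarrow> j < length ws \<Longrightarrow> joined A (ws ! j) (ws ! ((j + 1) mod length ws))"
  by (simp add: cycle_list_def)

lemma cycle_list_joined_pred:
  assumes "cycle_list A ws" "j < length ws"
  shows "joined A (ws ! ((j + length ws - 1) mod length ws)) (ws ! j)"
  using cycle_list_joined_succ[OF assms(1) pred_mod_length_less[OF assms(2)]]
  by (simp only: succ_pred_mod[OF assms(2)])

lemma cycle_list_nbrs_distinct:
  assumes c: "cycle_list F ws" and j: "j < length ws"
  shows "ws ! j \<noteq> ws ! ((j + 1) mod length ws)" "ws ! j \<noteq> ws ! ((j + length ws - 1) mod length ws)"
    "ws ! ((j + 1) mod length ws) \<noteq> ws ! ((j + length ws - 1) mod length ws)"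
proof -
  have d: "distinct ws" and k3: "3 \<le> length ws" using c by (auto simp: cycle_list_def)
  note eq_iff = nth_eq_iff_index_eq[OF d]
  show "ws ! j \<noteq> ws ! ((j + 1) mod length ws)"
    using eq_iff[OF j succ_mod_length_less[OF j]] succ_mod_neq[OF k3 j] by simp
  show "ws ! j \<noteq> ws ! ((j + length ws - 1) mod length ws)"
    using eq_iff[OF j pred_mod_length_less[OF j]] pred_mod_neq[OF k3 j] by simp
  show "ws ! ((j + 1) mod length ws) \<noteq> ws ! ((j + length ws - 1) mod length ws)"
    using eq_iff[OF succ_mod_length_less[OF j] pred_mod_length_less[OF j]] pred_mod_neq_succ_mod[OF k3 j]
    by simp
qed

lemma cycle_list_reach:
  assumes c: "cycle_list F ws" and sub: "set ws \<subseteq> S"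
  shows "j < length ws \<Longrightarrow> (ws ! 0, ws ! j) \<in> (sub_adj S F)\<^sup>*"
proof (induction j)
  case (Suc j)
  hence j: "j < length ws" by simp
  have "joined F (ws ! j) (ws ! Suc j)" using cycle_list_joined_succ[OF c j] Suc.prems by simp
  moreover have "ws ! j \<in> S" "ws ! Suc j \<in> S" using sub j Suc.prems nth_mem by blast+
  ultimately have "(ws ! j, ws ! Suc j) \<in> sub_adj S F" by (auto simp: sub_adj_def joined_def)
  with Suc.IH[OF j] show ?case by (rule rtrancl_into_rtrancl)
qed simp

section \<open>Removing a pendant vertex\<close>

definition pendant :: "('a \<times> 'a) set \<Rightarrow> 'a \<Rightarrow> 'a \<Rightarrow> 'a \<times> 'a \<Rightarrow> bool" where
  "pendant A v u e \<longleftrightarrow> (e = (v, u) \<or> e = (u, v)) \<and> u \<noteq> v \<and> (\<forall>a\<in>A. fst a = v \<or> snd a = v \<longrightarrow> a = e)"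

lemma pendant_subset: "pendant F v u e \<Longrightarrow> A \<subseteq> F \<Longrightarrow> pendant A v u e"
  by (auto simp: pendant_def)

lemma pendant_joined: "pendant A v u e \<Longrightarrow> joined A v w \<Longrightarrow> w = u"
  by (auto simp: pendant_def joined_def)

lemma inc_weight_remove_pendant:
  assumes fS: "finite S" and vS: "v \<in> S" and eF: "e \<in> F" and p: "pendant F v u e"
  shows "inc_weight S F = inc_weight (S - {v}) (F - {e})"
proof -
  have e: "e = (v, u) \<or> e = (u, v)" "u \<noteq> v" using p by (auto simp: pendant_def)
  have S: "S = {v} \<union> (S - {v})" and F: "F = {e} \<union> (F - {e})" using vS eF by auto
  have "g ` {v} \<subseteq> {e}" if "g \<in> incident_bij ({v} \<union> (S - {v})) ({e} \<union> (F - {e}))" for g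
  proof -
    have "g v \<in> F" "fst (g v) = v \<or> snd (g v) = v" using that vS eF by (auto simp: incident_bij_def bij_betw_def)
    thus ?thesis using p by (auto simp: pendant_def)
  qed
  hence "inc_weight ({v} \<union> (S - {v})) ({e} \<union> (F - {e})) = inc_weight {v} {e} * inc_weight (S - {v}) (F - {e})"
    by (intro inc_weight_split) (use fS in auto)
  moreover have "inc_weight {v} {e} = 1" using e by (intro inc_weight_single) auto
  ultimately show ?thesis using S F by simp
qed

lemma pendant_notin_cycle:
  assumes p: "pendant A v u e" and c: "cycle_list A ws"
  shows "v \<notin> set ws"
proof
  assume "v \<in> set ws"
  then obtain j where j: "j < length ws" "ws ! j = v" by (auto simp: in_set_conv_nth)
  have "ws ! ((j + 1) mod length ws) = u"
    using pendant_joined[OF p] cycle_list_joined_succ[OF c j(1)] j(2) by blast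
  moreover have "ws ! ((j + length ws - 1) mod length ws) = u"
    using pendant_joined[OF p] cycle_list_joined_pred[OF c j(1)] j(2) by (auto simp: joined_def)
  ultimately show False using cycle_list_nbrs_distinct(3)[OF c j(1)] by simp
qed

lemma cycle_list_remove_pendant:
  assumes p: "pendant A v u e"
  shows "cycle_list (A - {e}) ws \<longleftrightarrow> cycle_list A ws"
proof
  assume c: "cycle_list A ws"
  have "joined (A - {e}) (ws ! j) (ws ! ((j + 1) mod length ws))" if j: "j < length ws" for j
  proof -
    have "ws ! j \<noteq> v" "ws ! ((j + 1) mod length ws) \<noteq> v"
      using pendant_notin_cycle[OF p c] nth_mem[OF j] nth_mem[OF succ_mod_length_less[OF j]] by auto
    thus ?thesis using cycle_list_joined_succ[OF c j] p by (auto simp: joined_def pendant_def)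
  qed
  thus "cycle_list (A - {e}) ws" using c unfolding cycle_list_def by blast
next
  assume "cycle_list (A - {e}) ws"
  thus "cycle_list A ws" unfolding cycle_list_def joined_def by auto
qed

lemma cycle_arcs_remove_pendant:
  assumes p: "pendant A v u e" and c: "cycle_list A ws"
  shows "cycle_arcs (A - {e}) ws = cycle_arcs A ws" and "cyc_val (A - {e}) ws = cyc_val A ws"
proof -
  have "ws ! j \<noteq> v" "ws ! ((j + 1) mod length ws) \<noteq> v" if j: "j < length ws" for j
    using pendant_notin_cycle[OF p c] nth_mem[OF j] nth_mem[OF succ_mod_length_less[OF j]] by auto
  hence off: "(ws ! j, ws ! ((j + 1) mod length ws)) \<noteq> e" "(ws ! ((j + 1) mod length ws), ws ! j) \<noteq> e"
    if "j < length ws" for j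
    using p that by (auto simp: pendant_def)
  thus "cycle_arcs (A - {e}) ws = cycle_arcs A ws" unfolding cycle_arcs_def by blast
  have "fwd_count (A - {e}) ws = fwd_count A ws"
    unfolding fwd_count_def using off by (metis Diff_iff singletonD)
  thus "cyc_val (A - {e}) ws = cyc_val A ws" by (simp add: cyc_val_def)
qed

lemma is_cycle_remove_pendant:
  assumes p: "pendant A v u e"
  shows "is_cycle (A - {e}) Z \<longleftrightarrow> is_cycle A Z"
proof -
  have "cycle_list (A - {e}) vs \<and> Z = cycle_arcs (A - {e}) vs \<longleftrightarrow> cycle_list A vs \<and> Z = cycle_arcs A vs" for vs
    using cycle_list_remove_pendant[OF p] cycle_arcs_remove_pendant(1)[OF p] by blast
  thus ?thesis unfolding is_cycle_def by blast
qed

lemma sub_adj_rtrancl_remove_pendant: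
  assumes "(x, y) \<in> (sub_adj S F)\<^sup>*" "x \<noteq> v" and p: "pendant F v u e"
  shows "(x, if y = v then u else y) \<in> (sub_adj (S - {v}) (F - {e}))\<^sup>*"
  using assms(1)
proof (induction rule: rtrancl_induct)
  case (step y z)
  have yz: "joined F y z" "joined F z y" using step.hyps(2) by (auto simp: sub_adj_def joined_def)
  have uv: "u \<noteq> v" using p by (simp add: pendant_def)
  consider "y = v" | "y \<noteq> v" "z = v" | "y \<noteq> v" "z \<noteq> v" by blast
  thus ?case
  proof cases
    case 1
    hence "z = u" using pendant_joined[OF p] yz(1) by blast
    thus ?thesis using step.IH 1 uv by simp
  next
    case 2
    hence "y = u" using pendant_joined[OF p] yz(2) by blast
    thus ?thesis using step.IH 2 by simp
  next
    case 3
    hence "(y, z) \<in> sub_adj (S - {v}) (F - {e})" using step.hyps(2) p by (auto simp: sub_adj_def pendant_def)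
    thus ?thesis using step.IH 3 by simp
  qed
qed (use assms(2) in simp)

lemma sub_conn_remove_pendant:
  assumes p: "pendant F v u e"
  shows "sub_conn (S - {v}) (F - {e}) = sub_conn S F \<inter> ((S - {v}) \<times> (S - {v}))"
proof
  show "sub_conn (S - {v}) (F - {e}) \<subseteq> sub_conn S F \<inter> ((S - {v}) \<times> (S - {v}))"
    using sub_conn_mono[of "S - {v}" S "F - {e}" F] by (auto simp: sub_conn_def)
  show "sub_conn S F \<inter> ((S - {v}) \<times> (S - {v})) \<subseteq> sub_conn (S - {v}) (F - {e})"
  proof
    fix q assume "q \<in> sub_conn S F \<inter> ((S - {v}) \<times> (S - {v}))"
    then obtain x y where xy: "q = (x, y)" "x \<in> S - {v}" "y \<in> S - {v}" "(x, y) \<in> (sub_adj S F)\<^sup>*"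
      by (auto simp: sub_conn_def)
    hence "(x, y) \<in> (sub_adj (S - {v}) (F - {e}))\<^sup>*"
      using sub_adj_rtrancl_remove_pendant[OF xy(4) _ p] by simp
    thus "q \<in> sub_conn (S - {v}) (F - {e})" using xy by (simp add: sub_conn_def)
  qed
qed

lemma unicyclic_remove_pendant:
  assumes p: "pendant A v u e" and eA: "e \<in> A" and vC: "v \<in> C" and uC: "u \<in> C"
  shows "unicyclic (C - {v}) (A - {e}) \<longleftrightarrow> unicyclic C A"
proof -
  have e: "e = (v, u) \<or> e = (u, v)" and uv: "u \<noteq> v" and only: "\<forall>a\<in>A. fst a = v \<or> snd a = v \<longrightarrow> a = e"
    using p by (auto simp: pendant_def)
  have ends: "fst e \<in> C \<and> snd e \<in> C" using e vC uC by auto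
  have inside: "(\<forall>a \<in> A - {e}. fst a \<in> C - {v} \<and> snd a \<in> C - {v}) \<longleftrightarrow> (\<forall>a \<in> A. fst a \<in> C \<and> snd a \<in> C)"
    using only ends by blast
  have mono: "(sub_adj (C - {v}) (A - {e}))\<^sup>* \<subseteq> (sub_adj C A)\<^sup>*"
    by (rule rtrancl_mono) (auto simp: sub_adj_def)
  have vu: "(v, u) \<in> (sub_adj C A)\<^sup>*" "(u, v) \<in> (sub_adj C A)\<^sup>*"
    using e eA vC uC by (auto simp: sub_adj_def)
  have conn: "(\<forall>x \<in> C - {v}. \<forall>y \<in> C - {v}. (x, y) \<in> (sub_adj (C - {v}) (A - {e}))\<^sup>*)
      \<longleftrightarrow> (\<forall>x \<in> C. \<forall>y \<in> C. (x, y) \<in> (sub_adj C A)\<^sup>*)"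
  proof
    assume h: "\<forall>x \<in> C - {v}. \<forall>y \<in> C - {v}. (x, y) \<in> (sub_adj (C - {v}) (A - {e}))\<^sup>*"
    have "(x, u) \<in> (sub_adj C A)\<^sup>* \<and> (u, x) \<in> (sub_adj C A)\<^sup>*" if "x \<in> C" for x
    proof (cases "x = v")
      case False
      hence "x \<in> C - {v}" "u \<in> C - {v}" using that uC uv by auto
      thus ?thesis using h mono by blast
    qed (use vu in simp)
    thus "\<forall>x \<in> C. \<forall>y \<in> C. (x, y) \<in> (sub_adj C A)\<^sup>*" by (meson rtrancl_trans)
  next
    assume h: "\<forall>x \<in> C. \<forall>y \<in> C. (x, y) \<in> (sub_adj C A)\<^sup>*"
    show "\<forall>x \<in> C - {v}. \<forall>y \<in> C - {v}. (x, y) \<in> (sub_adj (C - {v}) (A - {e}))\<^sup>*"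
    proof (intro ballI)
      fix x y assume x: "x \<in> C - {v}" and y: "y \<in> C - {v}"
      have "(x, y) \<in> (sub_adj C A)\<^sup>*" using h x y by blast
      from sub_adj_rtrancl_remove_pendant[OF this _ p] x y
      show "(x, y) \<in> (sub_adj (C - {v}) (A - {e}))\<^sup>*" by simp
    qed
  qed
  show ?thesis
    unfolding unicyclic_def inside conn is_cycle_remove_pendant[OF p] ..
qed

lemma comp_classes_remove_pendant:
  assumes p: "pendant A v u e" and "e \<in> A" "v \<in> C" "u \<in> C"
  shows "alpha_comp (C - {v}) (A - {e}) \<longleftrightarrow> alpha_comp C A"
    and "beta_comp (C - {v}) (A - {e}) \<longleftrightarrow> beta_comp C A"
    and "vanishing_comp (C - {v}) (A - {e}) \<longleftrightarrow> vanishing_comp C A"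
proof -
  have cv: "(\<exists>ws. cycle_list (A - {e}) ws \<and> P (cyc_val (A - {e}) ws)) \<longleftrightarrow> (\<exists>ws. cycle_list A ws \<and> P (cyc_val A ws))"
    for P
    using cycle_list_remove_pendant[OF p] cycle_arcs_remove_pendant(2)[OF p] by metis
  note u = unicyclic_remove_pendant[OF assms]
  show "alpha_comp (C - {v}) (A - {e}) \<longleftrightarrow> alpha_comp C A"
    unfolding alpha_comp_def u using cv[of "\<lambda>n. n mod 5 \<in> {2, 3}"] by simp
  show "beta_comp (C - {v}) (A - {e}) \<longleftrightarrow> beta_comp C A"
    unfolding beta_comp_def u using cv[of "\<lambda>n. n mod 5 \<in> {1, 4}"] by simp
  show "vanishing_comp (C - {v}) (A - {e}) \<longleftrightarrow> vanishing_comp C A"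
    unfolding vanishing_comp_def u using cv[of "\<lambda>n. n mod 5 = 0"] by simp
qed

lemma comp_weight_remove_pendant:
  assumes fC: "finite C" and fA: "finite A" and p: "pendant A v u e" and eA: "e \<in> A"
    and vC: "v \<in> C" and uC: "u \<in> C"
  shows "comp_weight (C - {v}) (A - {e}) = comp_weight C A"
proof -
  have "card C \<ge> 1" "card A \<ge> 1" using fC vC fA eA by (auto simp: Suc_le_eq card_gt_0_iff)
  hence "card (C - {v}) = card (A - {e}) \<longleftrightarrow> card C = card A"
    using vC eA fC fA by (simp add: card_Diff_singleton, linarith)
  thus ?thesis using comp_classes_remove_pendant[OF p eA vC uC] by (simp add: comp_weight_def)
qed

lemma sub_weight_remove_pendant:
  assumes fS: "finite S" and fF: "finite F" and vS: "v \<in> S" and uS: "u \<in> S"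
    and p: "pendant F v u e" and eF: "e \<in> F"
  shows "sub_weight S F = sub_weight (S - {v}) (F - {e})"
proof -
  let ?R = "sub_conn S F"
  define C where "C = ?R `` {u}"
  define A where "A = comp_arcs F C"
  have C: "C \<in> components S F" unfolding C_def by (rule component_of[OF uS])
  have e: "e = (v, u) \<or> e = (u, v)" and uv: "u \<noteq> v" using p by (auto simp: pendant_def)
  have "(u, v) \<in> ?R" using e eF uS vS by (intro sub_adj_imp_sub_conn) (auto simp: sub_adj_def)
  hence vC: "v \<in> C" and uC: "u \<in> C" using equiv_class_self[OF sub_conn_equiv uS] by (auto simp: C_def)
  have eA: "e \<in> A" using eF e vC by (auto simp: A_def comp_arcs_def)
  have CS: "C \<subseteq> S" by (rule components_subset[OF C])
  note restrict = sub_conn_remove_pendant[OF p, of S]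
  have "sub_conn (S - {v}) (F - {e}) `` {u} = C - {v}"
    using uS uv CS unfolding restrict C_def by auto
  hence C': "C - {v} \<in> components (S - {v}) (F - {e})"
    using component_of[of u "S - {v}" "F - {e}"] uS uv by simp
  have "fst a \<noteq> v \<and> snd a \<noteq> v" if "a \<in> F - {e}" for a using p that by (auto simp: pendant_def)
  hence A': "comp_arcs (F - {e}) (C - {v}) = A - {e}" by (auto simp: A_def comp_arcs_def)
  have "S - {v} - (C - {v}) = S - C" "F - {e} - (A - {e}) = F - A" using vC eA by auto
  hence "sub_weight (S - {v}) (F - {e}) = comp_weight (C - {v}) (A - {e}) * sub_weight (S - C) (F - A)"
    using sub_weight_remove_component[OF _ C'] fS A' by simp
  also have "comp_weight (C - {v}) (A - {e}) = comp_weight C A"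
  proof (rule comp_weight_remove_pendant[OF _ _ pendant_subset[OF p] eA vC uC])
    show "finite C" using fS CS by (rule rev_finite_subset)
    show "finite A" "A \<subseteq> F" using fF by (auto simp: A_def comp_arcs_def)
  qed
  finally show ?thesis using sub_weight_remove_component[OF fS C] by (simp add: A_def)
qed

lemma sub_weight_remove_pendant_outside:
  assumes fS: "finite S" and vS: "v \<in> S" and uS: "u \<notin> S" and p: "pendant F v u e" and eF: "e \<in> F"
  shows "sub_weight S F = sub_weight (S - {v}) (F - {e})"
proof -
  have e: "e = (v, u) \<or> e = (u, v)" using p by (simp add: pendant_def)
  have "(v, y) \<notin> sub_adj S F" for y
  proof
    assume "(v, y) \<in> sub_adj S F"
    hence "joined F v y" "y \<in> S" by (auto simp: sub_adj_def joined_def)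
    thus False using pendant_joined[OF p] uS by blast
  qed
  hence C: "{v} \<in> components S F" by (intro isolated_component[OF vS]) blast
  have "comp_arcs F {v} \<subseteq> {e}" using p by (auto simp: comp_arcs_def pendant_def)
  moreover have "e \<in> comp_arcs F {v}" using eF e by (auto simp: comp_arcs_def)
  ultimately have ca: "comp_arcs F {v} = {e}" by blast
  have "\<not> (\<forall>a\<in>{e}. fst a \<in> {v} \<and> snd a \<in> {v})" using e uS vS by (cases e) auto
  hence "\<not> unicyclic {v} {e}" unfolding unicyclic_def by blast
  hence "comp_weight {v} (comp_arcs F {v}) = 1"
    unfolding ca by (simp add: comp_weight_def alpha_comp_def beta_comp_def vanishing_comp_def)
  thus ?thesis using sub_weight_remove_component[OF fS C] ca by simp
qed

section \<open>Substructures of minimum degree two\<close>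

definition arcs_at :: "('a \<times> 'a) set \<Rightarrow> 'a \<Rightarrow> ('a \<times> 'a) set" where
  "arcs_at F x = {a \<in> F. fst a = x \<or> snd a = x}"

definition arc_of :: "('a \<times> 'a) set \<Rightarrow> 'a \<Rightarrow> 'a \<Rightarrow> 'a \<times> 'a" where
  "arc_of F x y = (if (x, y) \<in> F then (x, y) else (y, x))"

definition oriented :: "('a \<times> 'a) set \<Rightarrow> bool" where
  "oriented F \<longleftrightarrow> (\<forall>a\<in>F. fst a \<noteq> snd a) \<and> (\<forall>x y. (x, y) \<in> F \<longrightarrow> (y, x) \<notin> F)"

lemma oriented_subset: "oriented F \<Longrightarrow> A \<subseteq> F \<Longrightarrow> oriented A"
  unfolding oriented_def by blast

lemma arc_of_arcs_at: "joined F x y \<Longrightarrow> arc_of F x y \<in> arcs_at F x \<and> arc_of F x y \<in> arcs_at F y"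
  by (auto simp: arc_of_def joined_def arcs_at_def)

lemma arc_of_cases: "arc_of F x y = (x, y) \<or> arc_of F x y = (y, x)"
  by (auto simp: arc_of_def)

lemma joined_neq: "oriented F \<Longrightarrow> joined F x y \<Longrightarrow> x \<noteq> y"
  by (auto simp: oriented_def joined_def)

lemma sum_card_filter_swap:
  assumes "finite X" "finite A"
  shows "(\<Sum>x\<in>X. card {a \<in> A. P x a}) = (\<Sum>a\<in>A. card {x \<in> X. P x a})"
proof -
  have "card {a \<in> A. P x a} = (\<Sum>a\<in>A. if P x a then 1 else 0)" for x
    using assms(2) by (simp add: sum.inter_filter[symmetric])
  moreover have "card {x \<in> X. P x a} = (\<Sum>x\<in>X. if P x a then 1 else 0)" for a
    using assms(1) by (simp add: sum.inter_filter[symmetric])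
  ultimately show ?thesis by (simp add: sum.swap[of _ X])
qed

(* Double counting of incidences: the degrees sum to at most twice the number of arcs. *)
lemma min_degree_two_imp_two_regular:
  assumes fS: "finite S" and fF: "finite F" and ori: "oriented F" and cS: "card F = card S"
    and dg: "\<forall>v\<in>S. card (arcs_at F v) \<ge> 2"
  shows "\<forall>v\<in>S. card (arcs_at F v) = 2" and "\<forall>a\<in>F. fst a \<in> S \<and> snd a \<in> S"
proof -
  define ends where "ends a = card {v \<in> S. fst a = v \<or> snd a = v}" for a
  have dc: "(\<Sum>v\<in>S. card (arcs_at F v)) = (\<Sum>a\<in>F. ends a)"
    unfolding arcs_at_def ends_def using sum_card_filter_swap[OF fS fF] by simp
  have ends_le: "ends a \<le> 2" for a
  proof -
    have "ends a \<le> card {fst a, snd a}" unfolding ends_def by (rule card_mono) auto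
    also have "\<dots> \<le> 2" by (simp add: card_insert_le_m1)
    finally show ?thesis .
  qed
  have s1: "(\<Sum>v\<in>S. 2) \<le> (\<Sum>v\<in>S. card (arcs_at F v))" using dg by (intro sum_mono) auto
  have s2: "(\<Sum>a\<in>F. ends a) \<le> (\<Sum>a\<in>F. 2)" using ends_le by (intro sum_mono) auto
  have s3: "(\<Sum>a\<in>F. (2::nat)) = (\<Sum>v\<in>S. 2)" using cS by simp
  have eq1: "(\<Sum>v\<in>S. (2::nat)) = (\<Sum>v\<in>S. card (arcs_at F v))" using s1 s2 s3 dc by linarith
  have eq2: "(\<Sum>a\<in>F. ends a) = (\<Sum>a\<in>F. 2)" using s1 s2 s3 dc by linarith
  show "\<forall>v\<in>S. card (arcs_at F v) = 2"
  proof
    fix v assume v: "v \<in> S"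
    show "card (arcs_at F v) = 2" using sum_mono_inv[OF eq1 _ v fS] dg by auto
  qed
  show "\<forall>a\<in>F. fst a \<in> S \<and> snd a \<in> S"
  proof
    fix a assume a: "a \<in> F"
    have "ends a = 2" using sum_mono_inv[OF eq2 _ a fF] ends_le by auto
    moreover have "card {fst a, snd a} = 2" using ori a by (auto simp: oriented_def)
    moreover have "{v \<in> S. fst a = v \<or> snd a = v} \<subseteq> {fst a, snd a}" by auto
    ultimately have "{v \<in> S. fst a = v \<or> snd a = v} = {fst a, snd a}"
      by (metis card_subset_eq finite.emptyI finite.insertI ends_def)
    thus "fst a \<in> S \<and> snd a \<in> S" by blast
  qed
qed

lemma two_regular_other_nbr:
  assumes ori: "oriented F" and deg: "card (arcs_at F c) = 2" and inS: "\<forall>a\<in>F. fst a \<in> S \<and> snd a \<in> S"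
  shows "\<exists>y. joined F c y \<and> y \<noteq> p \<and> y \<in> S"
proof -
  obtain b1 b2 where b: "arcs_at F c = {b1, b2}" "b1 \<noteq> b2" using deg by (meson card_2_iff)
  define other where "other b = (if fst b = c then snd b else fst b)" for b :: "'a \<times> 'a"
  have other: "joined F c (other b) \<and> other b \<in> S" if "b \<in> arcs_at F c" for b
    using that inS by (cases b) (auto simp: arcs_at_def other_def joined_def)
  have "other b1 \<noteq> other b2"
  proof
    assume eq: "other b1 = other b2"
    have "b1 \<in> arcs_at F c" "b2 \<in> arcs_at F c" using b by auto
    thus False using eq b(2) ori
      by (cases b1; cases b2) (auto simp: arcs_at_def other_def oriented_def split: if_splits)
  qed
  thus ?thesis using other b by (metis insertI1 insertI2)
qed

lemma cycle_list_from_walk: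
  assumes fS: "finite S" and ori: "oriented F" and xS: "\<And>n. x n \<in> S"
    and xj: "\<And>n. joined F (x n) (x (Suc n))" and nb: "\<And>n. x (Suc (Suc n)) \<noteq> x n"
  shows "\<exists>ws. cycle_list F ws \<and> set ws \<subseteq> S"
proof -
  have "\<not> inj_on x {..card S}"
  proof
    assume "inj_on x {..card S}"
    hence "card {..card S} \<le> card S" using xS fS by (intro card_inj_on_le) auto
    thus False by simp
  qed
  hence ex: "\<exists>j. \<exists>i<j. x i = x j" unfolding inj_on_def by (metis linorder_neqE_nat)
  define J where "J = (LEAST j. \<exists>i<j. x i = x j)"
  obtain i where i: "i < J" "x i = x J" using LeastI_ex[OF ex] unfolding J_def by blast
  have first: "x i' \<noteq> x j" if "j < J" "i' < j" for i' j
    using that not_less_Least[of j "\<lambda>j. \<exists>i<j. x i = x j"] unfolding J_def by blast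
  define ws where "ws = map x [i..<J]"
  have len: "length ws = J - i" and nth: "t < J - i \<Longrightarrow> ws ! t = x (i + t)" for t
    by (simp_all add: ws_def)
  have "inj_on x {i..<J}"
    by (rule inj_onI) (metis atLeastLessThan_iff first linorder_neqE_nat)
  hence dist: "distinct ws" by (simp add: ws_def distinct_map)
  have "J \<noteq> Suc i" using i(2) joined_neq[OF ori xj[of i]] by auto
  moreover have "J \<noteq> Suc (Suc i)" using i(2) nb[of i] by auto
  ultimately have l3: "3 \<le> length ws" using i(1) len by linarith
  have "joined F (ws ! t) (ws ! ((t + 1) mod length ws))" if t: "t < length ws" for t
  proof (cases "t + 1 < length ws")
    case True
    thus ?thesis using t nth len xj[of "i + t"] by simp
  next
    case False
    hence "t + 1 = length ws" "i + t + 1 = J" using t len i(1) by auto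
    thus ?thesis using t nth[of 0] nth[of t] len i xj[of "i + t"] by simp
  qed
  hence "cycle_list F ws" unfolding cycle_list_def using dist l3 by blast
  moreover have "set ws \<subseteq> S" using xS by (auto simp: ws_def)
  ultimately show ?thesis by blast
qed

lemma cycle_list_exists:
  assumes fS: "finite S" and ori: "oriented F" and x0: "x0 \<in> S"
    and nbr: "\<forall>c\<in>S. \<forall>p. \<exists>y. joined F c y \<and> y \<noteq> p \<and> y \<in> S"
  shows "\<exists>ws. cycle_list F ws \<and> set ws \<subseteq> S"
proof -
  define step where "step = (\<lambda>(p, c). (c, SOME y. joined F c y \<and> y \<noteq> p \<and> y \<in> S))"
  define x where "x n = snd ((step ^^ n) (x0, x0))" for n
  have step: "joined F c (snd (step (p, c))) \<and> snd (step (p, c)) \<noteq> p \<and> snd (step (p, c)) \<in> S"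
    if "c \<in> S" for p c
    unfolding step_def using someI_ex[OF nbr[rule_format, OF that]] by simp
  have xS: "x n \<in> S" for n
    by (induction n) (use x0 step in \<open>auto simp: x_def step_def split: prod.splits\<close>)
  have xSuc: "x (Suc n) = snd (step (fst ((step ^^ n) (x0, x0)), x n))" for n
    by (simp add: x_def step_def split: prod.splits)
  have fst_Suc: "fst ((step ^^ Suc n) (x0, x0)) = x n" for n
    by (simp add: x_def step_def split: prod.splits)
  show ?thesis
  proof (rule cycle_list_from_walk[OF fS ori xS])
    show "joined F (x n) (x (Suc n))" for n using step[OF xS] xSuc by simp
    show "x (Suc (Suc n)) \<noteq> x n" for n using step[OF xS] xSuc[of "Suc n"] fst_Suc[of n] by simp
  qed
qed

lemma arcs_at_cycle_vertex:
  assumes fF: "finite F" and c: "cycle_list F ws" and deg: "\<forall>x\<in>set ws. card (arcs_at F x) = 2"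
    and j: "j < length ws"
  shows "arcs_at F (ws ! j) = {arc_of F (ws ! j) (ws ! ((j + 1) mod length ws)),
                              arc_of F (ws ! ((j + length ws - 1) mod length ws)) (ws ! j)}"
proof -
  define a1 where "a1 = arc_of F (ws ! j) (ws ! ((j + 1) mod length ws))"
  define a2 where "a2 = arc_of F (ws ! ((j + length ws - 1) mod length ws)) (ws ! j)"
  have "a1 \<in> arcs_at F (ws ! j)" "a2 \<in> arcs_at F (ws ! j)"
    using arc_of_arcs_at[OF cycle_list_joined_succ[OF c j]] arc_of_arcs_at[OF cycle_list_joined_pred[OF c j]]
    by (simp_all add: a1_def a2_def)
  moreover have "a1 \<noteq> a2"
    using arc_of_cases[of F "ws ! j" "ws ! ((j + 1) mod length ws)"]
      arc_of_cases[of F "ws ! ((j + length ws - 1) mod length ws)" "ws ! j"] cycle_list_nbrs_distinct[OF c j]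
    unfolding a1_def a2_def by auto
  moreover have "finite (arcs_at F (ws ! j))" using fF by (simp add: arcs_at_def)
  moreover have "card (arcs_at F (ws ! j)) = 2" using deg j by simp
  ultimately show ?thesis unfolding a1_def[symmetric] a2_def[symmetric]
    by (metis card_2_iff card_subset_eq empty_subsetI insert_subset)
qed

lemma cycle_vertex_nbr:
  assumes fF: "finite F" and c: "cycle_list F ws" and deg: "\<forall>x\<in>set ws. card (arcs_at F x) = 2"
    and j: "j < length ws" and jy: "joined F (ws ! j) y"
  shows "y = ws ! ((j + 1) mod length ws) \<or> y = ws ! ((j + length ws - 1) mod length ws)"
proof -
  have "arc_of F (ws ! j) y = arc_of F (ws ! j) (ws ! ((j + 1) mod length ws)) \<or>
        arc_of F (ws ! j) y = arc_of F (ws ! ((j + length ws - 1) mod length ws)) (ws ! j)"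
    using arc_of_arcs_at[OF jy] arcs_at_cycle_vertex[OF fF c deg j] by simp
  thus ?thesis
    using arc_of_cases[of F "ws ! j" y] arc_of_cases[of F "ws ! j" "ws ! ((j + 1) mod length ws)"]
      arc_of_cases[of F "ws ! ((j + length ws - 1) mod length ws)" "ws ! j"] cycle_list_nbrs_distinct[OF c j]
    by auto
qed

lemma cycle_vertices_closed:
  assumes fF: "finite F" and c: "cycle_list F ws" and deg: "\<forall>x\<in>set ws. card (arcs_at F x) = 2"
    and r: "(x, y) \<in> (sub_adj S F)\<^sup>*" and x: "x \<in> set ws"
  shows "y \<in> set ws"
  using r
proof (induction rule: rtrancl_induct)
  case (step y z)
  obtain j where j: "j < length ws" "y = ws ! j" using step.IH by (auto simp: in_set_conv_nth)
  have "joined F (ws ! j) z" using step.hyps(2) j(2) by (auto simp: sub_adj_def joined_def)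
  thus ?case
    using cycle_vertex_nbr[OF fF c deg j(1)] nth_mem[OF succ_mod_length_less[OF j(1)]]
      nth_mem[OF pred_mod_length_less[OF j(1)]] by auto
qed (rule x)

section \<open>The incidence weight of a cycle\<close>

definition cycle_weight :: "nat \<Rightarrow> real" where
  "cycle_weight r = (if r = 0 then 0 else if r = 1 \<or> r = 4 then sqrt 5 / phi else sqrt 5 * phi)"

lemma omega5_eq_cis: "omega5 = cis (2 * pi / 5)"
  unfolding omega5_def cis_conv_exp by (simp add: mult.commute mult.left_commute)

(* cos 3w = cos 2w for w = 2pi/5, so c = cos w is a root of (c - 1)(4c^2 + 2c - 1). *)
lemma cos_2pi_div_5: "cos (2 * pi / 5) = (sqrt 5 - 1) / 4"
proof -
  define w where "w = 2 * pi / 5"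
  define c where "c = cos w"
  have w0: "0 < w" and w1: "w < pi / 2" using pi_gt_zero unfolding w_def by linarith+
  have cpos: "0 < c" unfolding c_def using cos_gt_zero[OF w0 w1] .
  have "sin w > 0" using sin_gt_zero[OF w0] w1 pi_gt_zero by linarith
  hence "sin w ^ 2 > 0" by simp
  hence "c ^ 2 < 1" using sin_cos_squared_add[of w] unfolding c_def by linarith
  hence c1: "c < 1" using cpos by (metis one_le_power not_less)
  have "cos (3 * w) = cos (2 * pi - 2 * w)" unfolding w_def by (simp add: algebra_simps)
  hence "4 * c ^ 3 - 3 * c = 2 * c ^ 2 - 1" unfolding c_def by (simp add: cos_treble_cos cos_double_cos)
  hence "(c - 1) * (4 * c ^ 2 + 2 * c - 1) = 0" by (simp add: algebra_simps power3_eq_cube power2_eq_square)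
  hence "4 * c ^ 2 + 2 * c - 1 = 0" using c1 by simp
  hence "(4 * c + 1) ^ 2 = 5" by (simp add: algebra_simps power2_eq_square)
  hence "sqrt 5 = 4 * c + 1" using cpos by (intro real_sqrt_unique) auto
  thus ?thesis unfolding c_def w_def by simp
qed

lemma cos_4pi_div_5: "cos (4 * pi / 5) = - (sqrt 5 + 1) / 4"
proof -
  have "cos (4 * pi / 5) = 2 * cos (2 * pi / 5) ^ 2 - 1"
    using cos_double_cos[of "2 * pi / 5"] by (simp add: algebra_simps)
  also have "\<dots> = 2 * ((sqrt 5 - 1) / 4) ^ 2 - 1" by (simp add: cos_2pi_div_5)
  also have "((sqrt 5 - 1) / 4) ^ 2 = (sqrt 5 * sqrt 5 - 2 * sqrt 5 + 1) / (16::real)"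
    by (simp add: power2_eq_square algebra_simps)
  finally show ?thesis by simp
qed

lemma cycle_weight_eq_cos: "2 - 2 * cos (2 * pi * real m / 5) = cycle_weight (m mod 5)"
proof -
  define r where "r = m mod 5"
  have "real m = real r + 5 * real (m div 5)" unfolding r_def
    by (metis of_nat_add of_nat_mult mod_div_mult_eq of_nat_numeral mult.commute)
  hence "2 * pi * real m / 5 = 2 * pi * real r / 5 + 2 * pi * real (m div 5)"
    by (simp add: algebra_simps)
  moreover have period: "cos (x + 2 * pi * real q) = cos x" for x q
  proof (induction q)
    case (Suc q)
    have "x + 2 * pi * real (Suc q) = (x + 2 * pi * real q) + 2 * pi" by (simp add: algebra_simps)
    thus ?case using Suc by (simp only: cos_periodic)
  qed simp
  ultimately have cm: "cos (2 * pi * real m / 5) = cos (2 * pi * real r / 5)" by (simp only:)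
  have s5: "sqrt 5 * sqrt 5 = (5::real)" by simp
  have "1 + sqrt 5 \<noteq> 0" by (metis add_pos_nonneg real_sqrt_ge_zero zero_less_one less_irrefl zero_le_numeral)
  hence v1: "sqrt 5 / phi = (5 - sqrt 5) / 2" unfolding phi_def by (simp add: field_simps s5)
  have v2: "sqrt 5 * phi = (5 + sqrt 5) / 2" unfolding phi_def by (simp add: field_simps s5)
  have c4: "cos (2 * pi * 4 / 5) = cos (2 * pi / 5)"
    using cos_2pi_minus[of "2 * pi / 5"] by (simp add: field_simps)
  have c3: "cos (2 * pi * 3 / 5) = cos (4 * pi / 5)"
    using cos_2pi_minus[of "4 * pi / 5"] by (simp add: field_simps)
  have "r < 5" unfolding r_def by simp
  hence "r = 0 \<or> r = 1 \<or> r = 2 \<or> r = 3 \<or> r = 4" by linarith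
  thus ?thesis unfolding cm r_def[symmetric]
    using cos_2pi_div_5 cos_4pi_div_5 c3 c4 v1 v2
    by (elim disjE) (simp_all add: cycle_weight_def field_simps)
qed

lemma cycle_weight_same_class:
  assumes "r < 5" "r' < 5" "cycle_weight r = cycle_weight r'"
  shows "(r = 0 \<longleftrightarrow> r' = 0) \<and> (r \<in> {1, 4} \<longleftrightarrow> r' \<in> {1, 4}) \<and> (r \<in> {2, 3} \<longleftrightarrow> r' \<in> {2, 3})"
proof -
  have s5: "sqrt 5 > 0" by simp
  have v1: "sqrt 5 / phi > 0" and v2: "sqrt 5 * phi > 0" using s5 phi_gt_1 by simp_all
  have "sqrt 5 / phi < sqrt 5" using s5 phi_gt_1 by (simp add: divide_less_eq)
  also have "\<dots> < sqrt 5 * phi" using s5 phi_gt_1 by simp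
  finally have v12: "sqrt 5 / phi < sqrt 5 * phi" .
  have "r = 0 \<or> r = 1 \<or> r = 4 \<or> r = 2 \<or> r = 3" "r' = 0 \<or> r' = 1 \<or> r' = 4 \<or> r' = 2 \<or> r' = 3"
    using assms(1,2) by linarith+
  thus ?thesis using assms(3) v1 v2 v12 unfolding cycle_weight_def by auto
qed

lemma omega5_power_add_cnj:
  fixes f k :: nat assumes "f \<le> k"
  shows "omega5 ^ f * cnj omega5 ^ (k - f) + cnj (omega5 ^ f * cnj omega5 ^ (k - f))
         = complex_of_real (2 * cos (2 * pi * real (k - 2 * min (k - f) f) / 5))"
proof -
  define d where "d = real f - real (k - f)"
  have "omega5 ^ f * cnj omega5 ^ (k - f) = cis (2 * pi * d / 5)"
    unfolding omega5_eq_cis d_def by (simp add: cis_cnj DeMoivre cis_mult algebra_simps diff_divide_distrib)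
  moreover have "cis t + cnj (cis t) = complex_of_real (2 * cos t)" for t
    by (simp add: cis_cnj complex_eq_iff)
  moreover have "real (k - 2 * min (k - f) f) = \<bar>d\<bar>"
    using assms unfolding d_def by (simp add: min_def)
  moreover have "cos (2 * pi * \<bar>d\<bar> / 5) = cos (2 * pi * d / 5)"
    using cos_abs_real[of "2 * pi * d / 5"] by (simp add: abs_mult)
  ultimately show ?thesis by simp
qed

lemma sign_cycle_of_list: "distinct ws \<Longrightarrow> sign (cycle_of_list ws) = (-1) ^ (length ws - 1)"
proof (induction ws rule: cycle_of_list.induct)
  case (1 i j cs)
  have "cycle_of_list (i # j # cs) = Transposition.transpose i j \<circ> cycle_of_list (j # cs)" by simp
  hence "sign (cycle_of_list (i # j # cs)) = sign (Transposition.transpose i j) * sign (cycle_of_list (j # cs))"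
    by (simp only: sign_compose[OF permutation_swap_id permutation_of_cycle])
  also have "\<dots> = - ((-1) ^ length cs)" using 1 by (simp add: sign_swap_id)
  finally show ?case by (simp del: cycle_of_list.simps)
qed auto

lemma incident_bij_intro:
  assumes "finite C" and "card C = card A" and "g \<in> extensional C"
    and inc: "\<forall>c\<in>C. g c \<in> arcs_at A c" and onto: "A \<subseteq> g ` C"
  shows "g \<in> incident_bij C A"
proof -
  have im: "g ` C = A" using inc onto by (auto simp: arcs_at_def)
  hence "inj_on g C" using assms(1,2) by (intro eq_card_imp_inj_on) auto
  thus ?thesis using assms(3) inc im by (auto simp: incident_bij_def bij_betw_def arcs_at_def)
qed

locale cycle_structure =
  fixes A :: "('a \<times> 'a) set" and ws :: "'a list"
  assumes finite_arcs: "finite A" and oriented_arcs: "oriented A" and cycle: "cycle_list A ws"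
    and degree_two: "\<forall>x\<in>set ws. card (arcs_at A x) = 2"
    and arcs_inside: "\<forall>a\<in>A. fst a \<in> set ws \<and> snd a \<in> set ws"
    and card_eq: "card (set ws) = card A"
begin

definition next_pos :: "nat \<Rightarrow> nat" where "next_pos j = (j + 1) mod length ws"

definition prev_pos :: "nat \<Rightarrow> nat" where "prev_pos j = (j + length ws - 1) mod length ws"

definition pos :: "'a \<Rightarrow> nat" where "pos x = inv_into {..<length ws} ((!) ws) x"

definition fwd_arc :: "nat \<Rightarrow> 'a \<times> 'a" where "fwd_arc j = arc_of A (ws ! j) (ws ! next_pos j)"

definition fwd_bij :: "'a \<Rightarrow> 'a \<times> 'a" where
  "fwd_bij x = (if x \<in> set ws then fwd_arc (pos x) else undefined)"

definition bwd_bij :: "'a \<Rightarrow> 'a \<times> 'a" where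
  "bwd_bij x = (if x \<in> set ws then fwd_arc (prev_pos (pos x)) else undefined)"

lemma distinct_ws: "distinct ws" and length_ge_3: "3 \<le> length ws"
  using cycle by (auto simp: cycle_list_def)

lemma next_pos_less: "j < length ws \<Longrightarrow> next_pos j < length ws"
  and prev_pos_less: "j < length ws \<Longrightarrow> prev_pos j < length ws"
  and next_prev_pos: "j < length ws \<Longrightarrow> next_pos (prev_pos j) = j"
  and prev_next_pos: "j < length ws \<Longrightarrow> prev_pos (next_pos j) = j"
  and next_pos_neq: "j < length ws \<Longrightarrow> ws ! j \<noteq> ws ! next_pos j"
  unfolding next_pos_def prev_pos_def
  using succ_mod_length_less pred_mod_length_less succ_pred_mod pred_succ_mod
    cycle_list_nbrs_distinct(1)[OF cycle] by auto

lemma pos_nth: "j < length ws \<Longrightarrow> pos (ws ! j) = j"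
  unfolding pos_def using distinct_ws by (simp add: inj_on_nth inv_into_f_eq)

lemma pos_in_set: "x \<in> set ws \<Longrightarrow> pos x < length ws \<and> ws ! pos x = x"
  by (metis in_set_conv_nth pos_nth)

lemma fwd_bij_nth: "j < length ws \<Longrightarrow> fwd_bij (ws ! j) = fwd_arc j"
  and bwd_bij_nth: "j < length ws \<Longrightarrow> bwd_bij (ws ! j) = fwd_arc (prev_pos j)"
  by (simp_all add: fwd_bij_def bwd_bij_def pos_nth)

lemma arcs_at_nth: "j < length ws \<Longrightarrow> arcs_at A (ws ! j) = {fwd_arc j, fwd_arc (prev_pos j)}"
  using arcs_at_cycle_vertex[OF finite_arcs cycle degree_two]
  by (simp add: fwd_arc_def next_prev_pos prev_pos_less) (simp add: next_pos_def prev_pos_def)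

lemma fwd_arc_neq_prev: "j < length ws \<Longrightarrow> fwd_arc j \<noteq> fwd_arc (prev_pos j)"
proof
  assume j: "j < length ws" and "fwd_arc j = fwd_arc (prev_pos j)"
  hence "arcs_at A (ws ! j) = {fwd_arc j}" using arcs_at_nth by simp
  moreover have "card (arcs_at A (ws ! j)) = 2" using degree_two nth_mem[OF j] by blast
  ultimately show False by simp
qed

lemma eq_on_cycleI:
  assumes "g \<in> extensional (set ws)" "h \<in> extensional (set ws)" "\<And>j. j < length ws \<Longrightarrow> g (ws ! j) = h (ws ! j)"
  shows "g = h"
proof (rule extensionalityI[OF assms(1,2)])
  fix x assume "x \<in> set ws"
  then obtain j where "j < length ws" "x = ws ! j" by (auto simp: in_set_conv_nth)
  thus "g x = h x" using assms(3) by simp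
qed

lemma fwd_bij_incident: "fwd_bij \<in> incident_bij (set ws) A"
  and bwd_bij_incident: "bwd_bij \<in> incident_bij (set ws) A"
proof -
  have onto: "A \<subseteq> g ` set ws" if g: "\<And>j. j < length ws \<Longrightarrow> fwd_arc j \<in> g ` set ws" for g
  proof
    fix b assume b: "b \<in> A"
    define j where "j = pos (fst b)"
    have j: "j < length ws" "b \<in> arcs_at A (ws ! j)"
      using pos_in_set arcs_inside b by (auto simp: j_def arcs_at_def)
    thus "b \<in> g ` set ws" using arcs_at_nth[OF j(1)] g prev_pos_less by auto
  qed
  have at: "fwd_arc (pos c) \<in> arcs_at A c" "fwd_arc (prev_pos (pos c)) \<in> arcs_at A c" if "c \<in> set ws" for c
    using pos_in_set[OF that] arcs_at_nth[of "pos c"] by auto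
  show "fwd_bij \<in> incident_bij (set ws) A"
  proof (rule incident_bij_intro[OF _ card_eq])
    show "\<forall>c\<in>set ws. fwd_bij c \<in> arcs_at A c" using at by (simp add: fwd_bij_def)
    have "fwd_arc j \<in> fwd_bij ` set ws" if "j < length ws" for j
      using fwd_bij_nth[OF that] nth_mem[OF that] by force
    thus "A \<subseteq> fwd_bij ` set ws" by (rule onto)
  qed (auto simp: fwd_bij_def extensional_def)
  show "bwd_bij \<in> incident_bij (set ws) A"
  proof (rule incident_bij_intro[OF _ card_eq])
    show "\<forall>c\<in>set ws. bwd_bij c \<in> arcs_at A c" using at by (simp add: bwd_bij_def)
    have "fwd_arc j \<in> bwd_bij ` set ws" if "j < length ws" for j
      using bwd_bij_nth[OF next_pos_less[OF that]] prev_next_pos[OF that] nth_mem[OF next_pos_less[OF that]]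
      by force
    thus "A \<subseteq> bwd_bij ` set ws" by (rule onto)
  qed (auto simp: bwd_bij_def extensional_def)
qed

lemma incident_bij_arcs_at:
  "g \<in> incident_bij (set ws) A \<Longrightarrow> j < length ws \<Longrightarrow> g (ws ! j) \<in> {fwd_arc j, fwd_arc (prev_pos j)}"
proof -
  assume g: "g \<in> incident_bij (set ws) A" and j: "j < length ws"
  hence "g (ws ! j) \<in> A" "fst (g (ws ! j)) = ws ! j \<or> snd (g (ws ! j)) = ws ! j"
    using nth_mem[OF j] by (auto simp: incident_bij_def bij_betw_def)
  hence "g (ws ! j) \<in> arcs_at A (ws ! j)" by (auto simp: arcs_at_def)
  thus ?thesis using arcs_at_nth[OF j] by simp
qed

lemma incident_bij_fwd_step:
  assumes g: "g \<in> incident_bij (set ws) A" and j: "j < length ws" and fw: "g (ws ! j) = fwd_arc j"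
  shows "g (ws ! next_pos j) = fwd_arc (next_pos j)"
proof -
  have "inj_on g (set ws)" using g by (auto simp: incident_bij_def bij_betw_def)
  hence "g (ws ! next_pos j) \<noteq> g (ws ! j)"
    using next_pos_neq[OF j] nth_mem[OF j] nth_mem[OF next_pos_less[OF j]] by (auto dest: inj_onD)
  thus ?thesis using incident_bij_arcs_at[OF g next_pos_less[OF j]] fw prev_next_pos[OF j] by auto
qed

lemma incident_bij_cases:
  assumes g: "g \<in> incident_bij (set ws) A"
  shows "g = fwd_bij \<or> g = bwd_bij"
proof (cases "\<exists>j0 < length ws. g (ws ! j0) = fwd_arc j0")
  case True
  then obtain j0 where j0: "j0 < length ws" "g (ws ! j0) = fwd_arc j0" by blast
  have along: "g (ws ! ((j0 + t) mod length ws)) = fwd_arc ((j0 + t) mod length ws)" for t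
  proof (induction t)
    case (Suc t)
    have "(j0 + Suc t) mod length ws = next_pos ((j0 + t) mod length ws)"
      by (simp add: next_pos_def mod_Suc_eq)
    moreover have "(j0 + t) mod length ws < length ws" using j0(1) by (metis mod_less_divisor not_less0 gr0I)
    ultimately show ?case using incident_bij_fwd_step[OF g _ Suc] by simp
  qed (use j0 in simp)
  have "g (ws ! j) = fwd_bij (ws ! j)" if j: "j < length ws" for j
    using along[of "j + length ws - j0"] j j0(1) by (simp add: fwd_bij_nth)
  hence "g = fwd_bij" using g by (intro eq_on_cycleI) (auto simp: incident_bij_def fwd_bij_def extensional_def)
  thus ?thesis ..
next
  case False
  hence "g (ws ! j) = bwd_bij (ws ! j)" if "j < length ws" for j
    using incident_bij_arcs_at[OF g that] that by (auto simp: bwd_bij_nth)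
  hence "g = bwd_bij" using g by (intro eq_on_cycleI) (auto simp: incident_bij_def bwd_bij_def extensional_def)
  thus ?thesis ..
qed

lemma incident_bij_cycle: "incident_bij (set ws) A = {fwd_bij, bwd_bij}"
  using fwd_bij_incident bwd_bij_incident incident_bij_cases by blast

lemma fwd_bij_neq_bwd_bij: "fwd_bij \<noteq> bwd_bij"
  using fwd_bij_nth bwd_bij_nth fwd_arc_neq_prev length_ge_3 by (metis less_le_trans zero_less_numeral)

lemma bij_perm_fwd_bwd: "bij_perm (set ws) fwd_bij bwd_bij = cycle_of_list ws"
proof
  fix x show "bij_perm (set ws) fwd_bij bwd_bij x = cycle_of_list ws x"
  proof (cases "x \<in> set ws")
    case True
    define j where "j = pos x"
    have j: "j < length ws" "ws ! j = x" using pos_in_set[OF True] by (auto simp: j_def)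
    have "bwd_bij (ws ! next_pos j) = fwd_arc j" using bwd_bij_nth[OF next_pos_less[OF j(1)]] prev_next_pos[OF j(1)] by simp
    moreover have "inj_on bwd_bij (set ws)" using bwd_bij_incident by (auto simp: incident_bij_def bij_betw_def)
    ultimately have "inv_into (set ws) bwd_bij (fwd_arc j) = ws ! next_pos j"
      using nth_mem[OF next_pos_less[OF j(1)]] by (simp add: inv_into_f_eq)
    hence "bij_perm (set ws) fwd_bij bwd_bij x = ws ! next_pos j"
      using True j fwd_bij_nth[OF j(1)] by (simp add: bij_perm_def)
    moreover have "cycle_of_list ws (ws ! j) = ws ! next_pos j"
    proof -
      have "map (cycle_of_list ws) ws = rotate1 ws" using cyclic_rotation[OF distinct_ws, of 1] by simp
      hence "cycle_of_list ws (ws ! j) = rotate1 ws ! j" using j(1) by (metis nth_map)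
      thus ?thesis using j(1) by (simp add: nth_rotate1 next_pos_def)
    qed
    ultimately show ?thesis using j(2) by simp
  next
    case False thus ?thesis by (simp add: bij_perm_def id_outside_supp)
  qed
qed

lemma inc_entry_fwd_arc:
  assumes "j < length ws"
  shows "inc_entry (fwd_arc j) (ws ! j) * cnj (inc_entry (fwd_arc j) (ws ! next_pos j)) =
     (if (ws ! j, ws ! next_pos j) \<in> A then - omega5 else - cnj omega5)"
  using next_pos_neq[OF assms] by (auto simp: fwd_arc_def arc_of_def inc_entry_def)

lemma prod_fwd_bwd:
  "(\<Prod>x\<in>set ws. inc_entry (fwd_bij x) x * cnj (inc_entry (bwd_bij x) x))
     = (- omega5) ^ fwd_count A ws * (- cnj omega5) ^ (length ws - fwd_count A ws)"
proof -
  let ?k = "length ws"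
  define P where "P j = ((ws ! j, ws ! next_pos j) \<in> A)" for j
  have "(\<Prod>x\<in>set ws. inc_entry (fwd_bij x) x * cnj (inc_entry (bwd_bij x) x))
      = (\<Prod>j<?k. inc_entry (fwd_arc j) (ws ! j) * cnj (inc_entry (fwd_arc (prev_pos j)) (ws ! j)))"
  proof -
    have img: "(!) ws ` {..<?k} = set ws" by (auto simp: in_set_conv_nth)
    have inj: "inj_on ((!) ws) {..<?k}" using distinct_ws by (simp add: inj_on_nth)
    show ?thesis unfolding img[symmetric] prod.reindex[OF inj, unfolded comp_def]
      by (rule prod.cong[OF refl]) (simp add: fwd_bij_nth bwd_bij_nth)
  qed
  also have "\<dots> = (\<Prod>j<?k. inc_entry (fwd_arc j) (ws ! j)) * (\<Prod>j<?k. cnj (inc_entry (fwd_arc j) (ws ! next_pos j)))"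
    unfolding prod.distrib
    by (rule arg_cong[where f = "(*) _"], rule prod.reindex_bij_witness[where i = next_pos and j = prev_pos])
       (auto simp: next_prev_pos prev_next_pos next_pos_less prev_pos_less)
  also have "\<dots> = (\<Prod>j<?k. if P j then - omega5 else - cnj omega5)"
    unfolding prod.distrib[symmetric] P_def by (rule prod.cong[OF refl]) (simp add: inc_entry_fwd_arc)
  also have "\<dots> = (- omega5) ^ card ({..<?k} \<inter> {j. P j}) * (- cnj omega5) ^ card ({..<?k} \<inter> - {j. P j})"
    by (simp add: prod.If_cases)
  also have "{..<?k} \<inter> {j. P j} = {j. j < ?k \<and> (ws ! j, ws ! ((j + 1) mod ?k)) \<in> A}"
    by (auto simp: P_def next_pos_def)
  also have "{..<?k} \<inter> - {j. P j} = {..<?k} - {j. j < ?k \<and> (ws ! j, ws ! ((j + 1) mod ?k)) \<in> A}"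
    by (auto simp: P_def next_pos_def)
  also have "card ({..<?k} - {j. j < ?k \<and> (ws ! j, ws ! ((j + 1) mod ?k)) \<in> A}) = ?k - fwd_count A ws"
    unfolding fwd_count_def by (subst card_Diff_subset) auto
  finally show ?thesis by (simp add: fwd_count_def)
qed

lemma fwd_count_le: "fwd_count A ws \<le> length ws"
  unfolding fwd_count_def by (rule le_trans[OF card_mono[of "{..<length ws}"]]) auto

lemma bij_term_fwd_bwd:
  "bij_term (set ws) fwd_bij bwd_bij = - (omega5 ^ fwd_count A ws * cnj omega5 ^ (length ws - fwd_count A ws))"
proof -
  let ?k = "length ws" and ?f = "fwd_count A ws"
  let ?z = "omega5 ^ ?f * cnj omega5 ^ (?k - ?f)"
  have "(- omega5) ^ ?f * (- cnj omega5) ^ (?k - ?f) = ((-1) ^ ?f * (-1) ^ (?k - ?f)) * ?z"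
    unfolding power_minus[of omega5] power_minus[of "cnj omega5"] by (simp only: mult_ac)
  also have "(-1::complex) ^ ?f * (-1) ^ (?k - ?f) = (-1) ^ ?k"
    using fwd_count_le by (simp flip: power_add)
  finally have prod: "(- omega5) ^ ?f * (- cnj omega5) ^ (?k - ?f) = (-1) ^ ?k * ?z" .
  obtain m where m: "?k = Suc m" using length_ge_3 by (cases ?k) auto
  have "(-1::complex) ^ m * (-1) ^ m = 1" by (simp flip: power_add)
  hence "(-1::complex) ^ (?k - 1) * (-1) ^ ?k = -1" using m by simp
  thus ?thesis
    unfolding bij_term_def bij_perm_fwd_bwd sign_cycle_of_list[OF distinct_ws] prod_fwd_bwd prod
    by (simp add: mult.assoc[symmetric])
qed

(* The two incident bijections contribute 1 + 1 - z - cnj z with z = omega5^(f - (k - f)). *)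
theorem inc_weight_cycle: "inc_weight (set ws) A = complex_of_real (cycle_weight (cyc_val A ws mod 5))"
proof -
  let ?z = "omega5 ^ fwd_count A ws * cnj omega5 ^ (length ws - fwd_count A ws)"
  have loopless: "\<forall>b\<in>A. fst b \<noteq> snd b" using oriented_arcs by (simp add: oriented_def)
  have "inc_weight (set ws) A = bij_term (set ws) fwd_bij fwd_bij + bij_term (set ws) fwd_bij bwd_bij
      + (bij_term (set ws) bwd_bij fwd_bij + bij_term (set ws) bwd_bij bwd_bij)"
    unfolding inc_weight_def incident_bij_cycle using fwd_bij_neq_bwd_bij by simp
  also have "\<dots> = 2 - (?z + cnj ?z)"
    using bij_term_self[OF fwd_bij_incident loopless] bij_term_self[OF bwd_bij_incident loopless]
      bij_term_swap[OF _ fwd_bij_incident bwd_bij_incident] bij_term_fwd_bwd by simp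
  also have "?z + cnj ?z = complex_of_real (2 * cos (2 * pi * real (cyc_val A ws) / 5))"
    using omega5_power_add_cnj[OF fwd_count_le] by (simp add: cyc_val_def Let_def)
  finally show ?thesis using cycle_weight_eq_cos[of "cyc_val A ws"] by (metis of_real_diff of_real_numeral)
qed

lemma connected: "x \<in> set ws \<Longrightarrow> y \<in> set ws \<Longrightarrow> (x, y) \<in> (sub_adj (set ws) A)\<^sup>*"
proof -
  have from0: "(ws ! 0, z) \<in> (sub_adj (set ws) A)\<^sup>*" if "z \<in> set ws" for z
    using that cycle_list_reach[OF cycle order_refl] by (auto simp: in_set_conv_nth)
  have "sym ((sub_adj (set ws) A)\<^sup>*)" by (rule sym_rtrancl) (auto simp: sym_def sub_adj_def)
  thus "x \<in> set ws \<Longrightarrow> y \<in> set ws \<Longrightarrow> (x, y) \<in> (sub_adj (set ws) A)\<^sup>*"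
    using from0 by (meson rtrancl_trans symD)
qed

lemma other_cycle_list:
  assumes c': "cycle_list A ws'"
  shows "set ws' = set ws" and "cycle_arcs A ws' = A"
proof -
  have sub: "set ws' \<subseteq> set ws"
  proof
    fix x assume "x \<in> set ws'"
    then obtain j where j: "j < length ws'" "x = ws' ! j" by (auto simp: in_set_conv_nth)
    have "joined A x (ws' ! ((j + 1) mod length ws'))" using cycle_list_joined_succ[OF c' j(1)] j(2) by simp
    thus "x \<in> set ws" using arcs_inside unfolding joined_def by force
  qed
  have deg': "\<forall>x\<in>set ws'. card (arcs_at A x) = 2" using degree_two sub by auto
  have "ws' \<noteq> []" using c' by (auto simp: cycle_list_def)
  hence w0: "ws' ! 0 \<in> set ws'" by simp
  show eq: "set ws' = set ws"
    using sub cycle_vertices_closed[OF finite_arcs c' deg' connected w0] sub w0 by blast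
  show "cycle_arcs A ws' = A"
  proof
    show "A \<subseteq> cycle_arcs A ws'"
    proof
      fix b assume b: "b \<in> A"
      then obtain j where j: "j < length ws'" "fst b = ws' ! j"
        using arcs_inside eq by (metis in_set_conv_nth)
      have "b \<in> arcs_at A (ws' ! j)" using b j by (simp add: arcs_at_def)
      hence "b = arc_of A (ws' ! j) (ws' ! ((j + 1) mod length ws')) \<or>
             b = arc_of A (ws' ! ((j + length ws' - 1) mod length ws')) (ws' ! j)"
        using arcs_at_cycle_vertex[OF finite_arcs c' deg' j(1)] by auto
      thus "b \<in> cycle_arcs A ws'"
        using b j(1) pred_mod_length_less[OF j(1)] succ_pred_mod[OF j(1)] unfolding cycle_arcs_def arc_of_def
        by (auto split: if_splits)
    qed
  qed (auto simp: cycle_arcs_def)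
qed

lemma unicyclic: "unicyclic (set ws) A"
  unfolding unicyclic_def
proof (intro conjI)
  show "\<forall>e\<in>A. fst e \<in> set ws \<and> snd e \<in> set ws" by (rule arcs_inside)
  show "\<forall>u\<in>set ws. \<forall>v\<in>set ws. (u, v) \<in> (sub_adj (set ws) A)\<^sup>*" using connected by blast
  show "\<exists>!Z. is_cycle A Z"
    using cycle other_cycle_list(2) unfolding is_cycle_def by metis
qed

lemma cycle_weight_other_cycle_list:
  assumes c': "cycle_list A ws'"
  shows "cycle_weight (cyc_val A ws' mod 5) = cycle_weight (cyc_val A ws mod 5)"
proof -
  interpret other: cycle_structure A ws'
    using finite_arcs oriented_arcs c' degree_two arcs_inside card_eq other_cycle_list(1)[OF c']
    by unfold_locales simp_all
  show ?thesis using other.inc_weight_cycle inc_weight_cycle other_cycle_list(1)[OF c'] by simp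
qed

lemma comp_weight_cycle: "comp_weight (set ws) A = cycle_weight (cyc_val A ws mod 5)"
proof -
  define r where "r = cyc_val A ws mod 5"
  have cls: "(\<exists>ws'. cycle_list A ws' \<and> Q (cyc_val A ws' mod 5)) \<longleftrightarrow> Q r"
    if Q: "\<And>r r'. r < 5 \<Longrightarrow> r' < 5 \<Longrightarrow> cycle_weight r = cycle_weight r' \<Longrightarrow> Q r \<longleftrightarrow> Q r'" for Q
  proof
    assume "\<exists>ws'. cycle_list A ws' \<and> Q (cyc_val A ws' mod 5)"
    then obtain ws' where "cycle_list A ws'" "Q (cyc_val A ws' mod 5)" by blast
    thus "Q r" using Q[of "cyc_val A ws' mod 5" r] cycle_weight_other_cycle_list unfolding r_def by simp
  qed (use cycle r_def in blast)
  have "(\<exists>ws'. cycle_list A ws' \<and> cyc_val A ws' mod 5 = 0) \<longleftrightarrow> r = 0"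
    by (rule cls) (meson cycle_weight_same_class)
  hence "vanishing_comp (set ws) A \<longleftrightarrow> r = 0" unfolding vanishing_comp_def using unicyclic by simp
  moreover have "(\<exists>ws'. cycle_list A ws' \<and> cyc_val A ws' mod 5 \<in> {1, 4}) \<longleftrightarrow> r \<in> {1, 4}"
    by (rule cls) (meson cycle_weight_same_class)
  hence "beta_comp (set ws) A \<longleftrightarrow> r \<in> {1, 4}" unfolding beta_comp_def using unicyclic by simp
  moreover have "(\<exists>ws'. cycle_list A ws' \<and> cyc_val A ws' mod 5 \<in> {2, 3}) \<longleftrightarrow> r \<in> {2, 3}"
    by (rule cls) (meson cycle_weight_same_class)
  hence "alpha_comp (set ws) A \<longleftrightarrow> r \<in> {2, 3}" unfolding alpha_comp_def using unicyclic by simp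
  moreover consider "r = 0" | "r \<in> {1, 4}" | "r \<in> {2, 3}" unfolding r_def by fastforce
  ultimately show ?thesis unfolding comp_weight_def cycle_weight_def r_def[symmetric] using card_eq
    by cases auto
qed

end

lemma cycle_structure_comp_arcs:
  assumes fF: "finite F" and ori: "oriented F" and c: "cycle_list F ws"
    and deg: "\<forall>x\<in>set ws. card (arcs_at F x) = 2"
  shows "cycle_structure (comp_arcs F (set ws)) ws"
proof -
  let ?C = "set ws" and ?A = "comp_arcs F (set ws)"
  have nbr: "y \<in> ?C" if "x \<in> ?C" "joined F x y" for x y
  proof -
    have "(x, y) \<in> (sub_adj UNIV F)\<^sup>*" using that(2) by (auto simp: sub_adj_def joined_def)
    thus ?thesis by (rule cycle_vertices_closed[OF fF c deg _ that(1)])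
  qed
  have inside: "\<forall>a\<in>?A. fst a \<in> ?C \<and> snd a \<in> ?C"
  proof
    fix a assume "a \<in> ?A"
    hence "fst a \<in> ?C \<or> snd a \<in> ?C" "joined F (fst a) (snd a)" "joined F (snd a) (fst a)"
      by (auto simp: comp_arcs_def joined_def)
    thus "fst a \<in> ?C \<and> snd a \<in> ?C" using nbr by blast
  qed
  have arcs_at_eq: "arcs_at ?A x = arcs_at F x" if "x \<in> ?C" for x
    using that by (auto simp: arcs_at_def comp_arcs_def)
  have fA: "finite ?A" using fF by (simp add: comp_arcs_def)
  have oriA: "oriented ?A" using ori by (rule oriented_subset) (auto simp: comp_arcs_def)
  have "joined ?A x y" if "x \<in> ?C" "joined F x y" for x y
    using that by (auto simp: joined_def comp_arcs_def)
  hence cA: "cycle_list ?A ws" using c unfolding cycle_list_def by (metis nth_mem)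
  have degA: "\<forall>x\<in>?C. card (arcs_at ?A x) = 2" using deg arcs_at_eq by simp
  have "(\<Sum>x\<in>?C. card {a \<in> ?A. fst a = x \<or> snd a = x}) = (\<Sum>a\<in>?A. card {x \<in> ?C. fst a = x \<or> snd a = x})"
    by (rule sum_card_filter_swap) (use fA in auto)
  moreover have "(\<Sum>x\<in>?C. card {a \<in> ?A. fst a = x \<or> snd a = x}) = (\<Sum>x\<in>?C. 2)"
    using deg arcs_at_eq by (intro sum.cong) (auto simp: arcs_at_def)
  moreover have "card {x \<in> ?C. fst a = x \<or> snd a = x} = 2" if "a \<in> ?A" for a
  proof -
    have "{x \<in> ?C. fst a = x \<or> snd a = x} = {fst a, snd a}" using inside that by auto
    moreover have "fst a \<noteq> snd a" using oriA that by (auto simp: oriented_def)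
    ultimately show ?thesis by simp
  qed
  ultimately have "card ?C = card ?A" by simp
  with fA oriA cA degA inside show ?thesis by unfold_locales
qed

lemma cycle_in_components:
  assumes fF: "finite F" and c: "cycle_list F ws" and deg: "\<forall>x\<in>set ws. card (arcs_at F x) = 2"
    and sub: "set ws \<subseteq> S"
  shows "set ws \<in> components S F"
proof -
  have "ws \<noteq> []" using c by (auto simp: cycle_list_def)
  hence w0: "ws ! 0 \<in> set ws" "ws ! 0 \<in> S" using sub by auto
  have "sub_conn S F `` {ws ! 0} = set ws"
  proof
    show "sub_conn S F `` {ws ! 0} \<subseteq> set ws"
      using cycle_vertices_closed[OF fF c deg _ w0(1)] by (auto simp: sub_conn_def)
    show "set ws \<subseteq> sub_conn S F `` {ws ! 0}"
      using cycle_list_reach[OF c sub] sub w0 by (auto simp: sub_conn_def in_set_conv_nth)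
  qed
  thus ?thesis using component_of[OF w0(2), of F] by simp
qed

lemma exists_cycle_component:
  assumes fS: "finite S" and fF: "finite F" and ori: "oriented F" and Sne: "S \<noteq> {}"
    and deg: "\<forall>v\<in>S. card (arcs_at F v) = 2" and inS: "\<forall>a\<in>F. fst a \<in> S \<and> snd a \<in> S"
  obtains C where "C \<in> components S F" "C \<noteq> {}" "card C = card (comp_arcs F C)"
    "inc_weight C (comp_arcs F C) = complex_of_real (comp_weight C (comp_arcs F C))"
proof -
  obtain x0 where "x0 \<in> S" using Sne by auto
  moreover have "\<forall>c\<in>S. \<forall>p. \<exists>y. joined F c y \<and> y \<noteq> p \<and> y \<in> S"
    using two_regular_other_nbr[OF ori _ inS] deg by blast
  ultimately obtain ws where c: "cycle_list F ws" and sub: "set ws \<subseteq> S"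
    using cycle_list_exists[OF fS ori] by blast
  have degws: "\<forall>x\<in>set ws. card (arcs_at F x) = 2" using deg sub by blast
  interpret cycle_structure "comp_arcs F (set ws)" ws
    by (rule cycle_structure_comp_arcs[OF fF ori c degws])
  show ?thesis
  proof
    show "set ws \<in> components S F" by (rule cycle_in_components[OF fF c degws sub])
    show "set ws \<noteq> {}" using length_ge_3 by auto
  qed (use card_eq inc_weight_cycle comp_weight_cycle in simp_all)
qed

section \<open>Peeling off pendant vertices and cycle components\<close>

lemma degree_one_pendant:
  assumes ori: "oriented F" and deg: "card (arcs_at F v) = 1"
  obtains u e where "pendant F v u e" "e \<in> F"
proof -
  obtain e where e: "arcs_at F v = {e}" using deg by (rule card_1_singletonE)
  define u where "u = (if fst e = v then snd e else fst e)"
  have eF: "e \<in> F" and ve: "v = fst e \<or> v = snd e" using e by (auto simp: arcs_at_def)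
  have ne: "fst e \<noteq> snd e" using ori eF by (auto simp: oriented_def)
  have "e = (v, u) \<or> e = (u, v)" using ve by (cases e) (auto simp: u_def)
  moreover have "u \<noteq> v" using ve ne by (auto simp: u_def)
  moreover have "\<forall>a\<in>F. fst a = v \<or> snd a = v \<longrightarrow> a = e" using e by (auto simp: arcs_at_def)
  ultimately have "pendant F v u e" by (simp add: pendant_def)
  thus ?thesis using that eF by blast
qed

lemma inc_weight_remove_component:
  assumes fS: "finite S" and fF: "finite F" and C: "C \<in> components S F"
    and cC: "card C = card (comp_arcs F C)"
  shows "inc_weight S F = inc_weight C (comp_arcs F C) * inc_weight (S - C) (F - comp_arcs F C)"
proof -
  define A where "A = comp_arcs F C"
  have CS: "C \<subseteq> S" by (rule components_subset[OF C])
  have AF: "A \<subseteq> F" by (auto simp: A_def comp_arcs_def)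
  have sep: "\<forall>g\<in>incident_bij (C \<union> (S - C)) (A \<union> (F - A)). g ` C \<subseteq> A"
  proof
    fix g assume g: "g \<in> incident_bij (C \<union> (S - C)) (A \<union> (F - A))"
    show "g ` C \<subseteq> A"
    proof
      fix x assume "x \<in> g ` C"
      then obtain c where c: "c \<in> C" "x = g c" by blast
      have "g c \<in> F" "fst (g c) = c \<or> snd (g c) = c"
        using g c(1) AF by (auto simp: incident_bij_def bij_betw_def)
      thus "x \<in> A" using c by (auto simp: A_def comp_arcs_def)
    qed
  qed
  have "finite C" "finite (S - C)" "finite A" using fS CS fF AF by (auto intro: finite_subset)
  hence "inc_weight (C \<union> (S - C)) (A \<union> (F - A)) = inc_weight C A * inc_weight (S - C) (F - A)"
    using cC by (intro inc_weight_split[OF _ _ _ _ _ _ sep]) (auto simp: A_def)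
  moreover have "C \<union> (S - C) = S" "A \<union> (F - A) = F" using CS AF by auto
  ultimately show ?thesis by (simp add: A_def)
qed

lemma remove_degree_one_vertex:
  assumes fS: "finite S" and fF: "finite F" and ori: "oriented F" and vS: "v \<in> S"
    and deg: "card (arcs_at F v) = 1"
  obtains e where "e \<in> F" "inc_weight S F = inc_weight (S - {v}) (F - {e})"
    "sub_weight S F = sub_weight (S - {v}) (F - {e})"
proof -
  obtain u e where p: "pendant F v u e" and eF: "e \<in> F" using degree_one_pendant[OF ori deg] .
  have "sub_weight S F = sub_weight (S - {v}) (F - {e})"
    using sub_weight_remove_pendant[OF fS fF vS _ p eF] sub_weight_remove_pendant_outside[OF fS vS _ p eF]
    by blast
  thus ?thesis using that eF inc_weight_remove_pendant[OF fS vS eF p] by blast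
qed

lemma remove_cycle_component:
  assumes fS: "finite S" and fF: "finite F" and ori: "oriented F" and cFS: "card F = card S"
    and Sne: "S \<noteq> {}" and deg: "\<forall>v\<in>S. card (arcs_at F v) \<ge> 2"
  obtains C A where "C \<noteq> {}" "C \<subseteq> S" "A \<subseteq> F" "card (F - A) = card (S - C)"
    "inc_weight S F = complex_of_real (comp_weight C A) * inc_weight (S - C) (F - A)"
    "sub_weight S F = comp_weight C A * sub_weight (S - C) (F - A)"
proof -
  obtain C where C: "C \<in> components S F" "C \<noteq> {}" "card C = card (comp_arcs F C)"
    "inc_weight C (comp_arcs F C) = complex_of_real (comp_weight C (comp_arcs F C))"
    using exists_cycle_component[OF fS fF ori Sne min_degree_two_imp_two_regular[OF fS fF ori cFS deg]] .
  have CS: "C \<subseteq> S" by (rule components_subset[OF C(1)])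
  have AF: "comp_arcs F C \<subseteq> F" by (auto simp: comp_arcs_def)
  have "card (F - comp_arcs F C) = card (S - C)"
    using C(3) cFS CS AF fS fF by (simp add: card_Diff_subset finite_subset)
  thus ?thesis
    using that[OF C(2) CS AF] inc_weight_remove_component[OF fS fF C(1,3)] sub_weight_remove_component[OF fS C(1)] C(4)
    by simp
qed

theorem inc_weight_eq_sub_weight:
  "finite S \<Longrightarrow> finite F \<Longrightarrow> oriented F \<Longrightarrow> card F = card S \<Longrightarrow> inc_weight S F = complex_of_real (sub_weight S F)"
proof (induction "card S" arbitrary: S F rule: less_induct)
  case less
  note fS = less.prems(1) and fF = less.prems(2) and ori = less.prems(3) and cFS = less.prems(4)
  have IH: "inc_weight S' F' = complex_of_real (sub_weight S' F')"
    if "S' \<subseteq> S" "S' \<noteq> S" "F' \<subseteq> F" "card F' = card S'" for S' F'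
  proof -
    have "card S' < card S" using psubset_card_mono[OF fS] that(1,2) by blast
    moreover have "finite S'" "finite F'" "oriented F'"
      using that(1,3) fS fF oriented_subset[OF ori] by (auto intro: finite_subset)
    ultimately show ?thesis using less.hyps that(4) by blast
  qed
  have "card (arcs_at F v) = 0 \<or> card (arcs_at F v) = 1 \<or> card (arcs_at F v) \<ge> 2" for v by arith
  then consider "S = {}" | v where "v \<in> S" "card (arcs_at F v) = 0" | v where "v \<in> S" "card (arcs_at F v) = 1"
    | "S \<noteq> {}" "\<forall>v\<in>S. card (arcs_at F v) \<ge> 2" by blast
  thus ?case
  proof cases
    case 1
    thus ?thesis using cFS fF inc_weight_empty[where 'a = 'a] sub_weight_empty[where 'a = 'a] by simp
  next
    case (2 v)
    have "arcs_at F v = {}" using 2(2) fF by (simp add: arcs_at_def)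
    hence "\<forall>e\<in>F. fst e \<noteq> v \<and> snd e \<noteq> v" unfolding arcs_at_def by blast
    thus ?thesis using inc_weight_isolated[OF 2(1)] sub_weight_isolated[OF fS 2(1)] by simp
  next
    case (3 v)
    then obtain e where e: "e \<in> F" "inc_weight S F = inc_weight (S - {v}) (F - {e})"
      "sub_weight S F = sub_weight (S - {v}) (F - {e})"
      using remove_degree_one_vertex[OF fS fF ori] by blast
    moreover have "card (F - {e}) = card (S - {v})" using cFS e(1) 3(1) fF fS by simp
    ultimately show ?thesis using IH[of "S - {v}" "F - {e}"] 3(1) by auto
  next
    case 4
    then obtain C A where "C \<noteq> {}" "C \<subseteq> S" "A \<subseteq> F" "card (F - A) = card (S - C)"
      "inc_weight S F = complex_of_real (comp_weight C A) * inc_weight (S - C) (F - A)"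
      "sub_weight S F = comp_weight C A * sub_weight (S - C) (F - A)"
      using remove_cycle_component[OF fS fF ori cFS] by blast
    thus ?thesis using IH[of "S - C" "F - A"] by auto
  qed
qed

section \<open>The determinant formula\<close>

lemma det_on_cong: "(\<And>i j. i \<in> S \<Longrightarrow> j \<in> S \<Longrightarrow> M i j = N i j) \<Longrightarrow> det_on S M = det_on S N"
  unfolding det_on_def by (intro sum.cong refl arg_cong2[where f = "(*)"] prod.cong) (auto simp: permutes_in_image)

lemma oriented_graph_arcs: "oriented_graph V E \<Longrightarrow> F \<subseteq> E \<Longrightarrow> oriented F"
  unfolding oriented_graph_def oriented_def by (metis prod.collapse subsetD)

theorem mainTheorem12:
  fixes V :: "'a set" and E :: "('a \<times> 'a) set" and V' :: "'a set"
  assumes "oriented_graph V E" and "V' \<subseteq> V"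
  shows "det_on V' (Lmat omega5 E) =
    complex_of_real (\<Sum>E'\<in>{E'. E' \<subseteq> E \<and> card E' = card V' \<and> all_regular V' E'}.
       delta0 (n_van V' E') * sqrt 5 ^ (n_alpha V' E' + n_beta V' E')
       * ((1 + sqrt 5) / 2) powi (int (n_alpha V' E') - int (n_beta V' E')))"
proof -
  have fS: "finite V'" using assms unfolding oriented_graph_def by (blast intro: finite_subset)
  have fE: "finite E" using assms unfolding oriented_graph_def by (meson finite_SigmaI finite_subset)
  let ?Fs = "{F. F \<subseteq> E \<and> card F = card V'}"
  have "det_on V' (Lmat omega5 E) = det_on V' (\<lambda>i j. \<Sum>e\<in>E. inc_entry e i * cnj (inc_entry e j))"
    using Lmat_eq_inc_entry_sum[OF assms(1)] assms(2) by (intro det_on_cong) blast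
  also have "\<dots> = (\<Sum>F\<in>?Fs. inc_weight V' F)" by (rule det_on_inc_entry_sum[OF fS fE])
  also have "\<dots> = (\<Sum>F\<in>?Fs. complex_of_real (sub_weight V' F))"
    using inc_weight_eq_sub_weight[OF fS] oriented_graph_arcs[OF assms(1)] fE
    by (intro sum.cong) (auto intro: finite_subset)
  also have "\<dots> = complex_of_real (\<Sum>F\<in>?Fs. sub_weight V' F)" by simp
  also have "(\<Sum>F\<in>?Fs. sub_weight V' F) = (\<Sum>F\<in>{F \<in> ?Fs. all_regular V' F}. delta0 (n_van V' F)
      * ab_weight (n_alpha V' F) (n_beta V' F))"
    unfolding sub_weight_def by (rule sum.inter_filter[symmetric]) (simp add: fE)
  finally show ?thesis by (simp add: ab_weight_def phi_def mult.assoc)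
qed
end
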